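(* Let $n\geq 2$ and $1\leq\mu_0\leq\mu_1\leq\cdots\leq\mu_n$. There exists a small constant $0<\sigma_0<\sqrt{\sigma_*}$, depending only on $n$, such that if $h\in C^\infty(\overline\Omega,\mathrm{Sym}_n)$ satisfies $$\|h-h_*\|_0+\frac{\mu_0}{\mu_1}\leq 2\sigma_0,\qquad \|h\|_i\leq\mu_0^i\ \text{ for all } i\geq 1,$$ then for every $j\geq 0$ there exist $a^j=(a^j_1,\dots,a^j_{n_*})\in C^\infty(\overline\Omega,\mathbb{R}^{n_*})$ and $\mathcal{E}^j\in C^\infty(\overline\Omega,\mathrm{Sym}_n)$ such that $$h=\sum_{i=1}^{n_*}(a_i^j)^2\xi_i\otimes\xi_i+\sum_{i=1}^n\mu_i^{-2}\nabla a_i^j\otimes\nabla a_i^j+\mathcal{E}^j,$$ with $a_i^j\geq\sqrt{\sigma_*}$ for $i=1,\dots,n_*$, and for all $k\ge 0$, $$\|a^j\|_k\leq C\mu_0^k,\qquad \|\mathcal{E}^j\|_k\leq C(\mu_0\mu_1^{-1})^{2(j+1)}\mu_0^k,$$ where $C$ depends only on $n$ (and on $j,k$).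
   Context: $\Omega\subset\mathbb{R}^n$ is a bounded domain. $\mathrm{Sym}_n$ is the space of symmetric real $n\times n$ matrices, $n_*=n(n+1)/2$. $\{\xi_i\}_{i=1}^{n_*}=\{(e_i+e_j)/|e_i+e_j|:1\le i\le j\le n\}$ with $\xi_i=e_i$ for $i\le n$; $h_*=\sum_{i=1}^{n_*}\xi_i\otimes\xi_i$. $\sigma_*=\sigma_*(n)>0$ is a constant for which there exist linear maps $L_i:\mathrm{Sym}_n\to\mathbb{R}$ with $h=\sum_i L_i(h)\xi_i\otimes\xi_i$ for all $h\in\mathrm{Sym}_n$ and $L_i(h)\ge\sigma_*$ whenever $|h-h_*|\le 2\sigma_*$. Norms: $[f]_k=\sum_{|\beta|=k}\sup_\Omega|\nabla^\beta f|$, $\|f\|_k=\sum_{j\le k}[f]_j$. *)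

theory Defs
  imports "HOL-Analysis.Analysis"
begin

text \<open>A fixed enumeration of the coordinate index type; coordinate i (0-based) of R^n is coords ! i.\<close>
definition coords :: "'n::finite list" where
  "coords = (SOME xs. distinct xs \<and> set xs = UNIV)"

text \<open>Standard basis vector e_(i+1) of R^n (0-based index i).\<close>
definition ee :: "nat \<Rightarrow> real^'n::finite" where
  "ee i = axis (coords ! i) 1"

text \<open>Index set of the directions xi: pairs (i,j), i \<le> j < n (0-based); (i,i) is e_i.\<close>
definition Pairs :: "nat \<Rightarrow> (nat \<times> nat) set" where
  "Pairs n = {(i,j). i \<le> j \<and> j < n}"

definition xi :: "nat \<times> nat \<Rightarrow> real^'n::finite" where
  "xi P = (1 / norm (ee (fst P) + ee (snd P) :: real^'n)) *\<^sub>R (ee (fst P) + ee (snd P))"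

definition outer :: "real^'n \<Rightarrow> real^'n \<Rightarrow> real^'n^'n" where
  "outer u v = (\<chi> p q. u $ p * v $ q)"

definition hstar :: "real^'n::finite^'n" where
  "hstar = (\<Sum>P\<in>Pairs CARD('n). outer (xi P) (xi P))"

definition partial :: "'n::finite \<Rightarrow> (real^'n \<Rightarrow> real) \<Rightarrow> real^'n \<Rightarrow> real" where
  "partial p f x = deriv (\<lambda>t. f (x + t *\<^sub>R axis p 1)) 0"

fun Dl :: "'n::finite list \<Rightarrow> (real^'n \<Rightarrow> real) \<Rightarrow> real^'n \<Rightarrow> real" where
  "Dl [] f = f"
| "Dl (p # ds) f = partial p (Dl ds f)"

definition Dm :: "('n::finite \<Rightarrow> nat) \<Rightarrow> (real^'n \<Rightarrow> real) \<Rightarrow> real^'n \<Rightarrow> real" where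
  "Dm \<beta> f = Dl (concat (map (\<lambda>p. replicate (\<beta> p) p) coords)) f"

definition grad :: "(real^'n::finite \<Rightarrow> real) \<Rightarrow> real^'n \<Rightarrow> real^'n" where
  "grad f x = (\<chi> p. partial p f x)"

definition MI :: "nat \<Rightarrow> ('n::finite \<Rightarrow> nat) set" where
  "MI k = {\<beta>. sum \<beta> UNIV = k}"

text \<open>C^infinity(closure Omega): all iterated partial derivatives exist (differentiable) on the
  open set Omega and extend continuously to the closure (= uniformly continuous on bounded Omega).\<close>
definition smooth_cl :: "(real^'n::finite) set \<Rightarrow> (real^'n \<Rightarrow> real) \<Rightarrow> bool" where
  "smooth_cl \<Omega> f \<longleftrightarrow> (\<forall>ds. Dl ds f differentiable_on \<Omega> \<and> uniformly_continuous_on \<Omega> (Dl ds f))"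

definition semi :: "(real^'n::finite) set \<Rightarrow> 'j set \<Rightarrow> ('j \<Rightarrow> real^'n \<Rightarrow> real) \<Rightarrow> nat \<Rightarrow> real" where
  "semi \<Omega> J F k = (\<Sum>\<beta>\<in>MI k. (SUP x\<in>\<Omega>. sqrt (\<Sum>j\<in>J. (Dm \<beta> (F j) x)\<^sup>2)))"

definition cnorm :: "(real^'n::finite) set \<Rightarrow> 'j set \<Rightarrow> ('j \<Rightarrow> real^'n \<Rightarrow> real) \<Rightarrow> nat \<Rightarrow> real" where
  "cnorm \<Omega> J F k = (\<Sum>i\<le>k. semi \<Omega> J F i)"

text \<open>Entries of a matrix-valued function, as a family indexed by 'n \<times> 'n (Frobenius norm).\<close>
definition ents :: "(real^'n \<Rightarrow> real^'n^'n) \<Rightarrow> ('n \<times> 'n) \<Rightarrow> real^'n \<Rightarrow> real" where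
  "ents h = (\<lambda>(p,q) x. h x $ p $ q)"

text \<open>The defining property of sigma_* (norm on matrices: Frobenius = library norm on real^'n^'n).\<close>
definition sigma_star_prop :: "'n::finite itself \<Rightarrow> real \<Rightarrow> bool" where
  "sigma_star_prop _ \<sigma> \<longleftrightarrow> \<sigma> > 0 \<and>
     (\<exists>L :: nat \<times> nat \<Rightarrow> real^'n^'n \<Rightarrow> real.
        (\<forall>P\<in>Pairs CARD('n). linear (L P)) \<and>
        (\<forall>H. transpose H = H \<longrightarrow> H = (\<Sum>P\<in>Pairs CARD('n). L P H *\<^sub>R outer (xi P) (xi P))) \<and>
        (\<forall>H. transpose H = H \<and> norm (H - (hstar :: real^'n^'n)) \<le> 2 * \<sigma> \<longrightarrow>
              (\<forall>P\<in>Pairs CARD('n). L P H \<ge> \<sigma>)))"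

end

theory Submission
  imports Defs
begin

(* Let G(a) = \<Sum>_i \<mu>_(i+1)^-2 \<nabla>a_ii \<otimes> \<nabla>a_ii (grad_metric) and let L_P be the coefficient maps of
   sigma_star_prop. Starting from a^0 = 0, iterate a^(j+1)_P = sqrt (L_P (h - G(a^j))). Since h is
   close to h_* and G(a) has size \<epsilon>^2 with \<epsilon> = \<mu>_0/\<mu>_1, the arguments of the square roots stay
   above \<sigma>_*, and h = \<Sum>_P (a^(j+1)_P)^2 \<xi>_P\<otimes>\<xi>_P + G(a^(j+1)) + E with E = G(a^j) - G(a^(j+1)).
   The increment a^(j+1) - a^(j+2) is L_P (G(a^(j+1)) - G(a^j)) / (a^(j+1) + a^(j+2)), with denominator
   at least 2 sqrt \<sigma>_*, and G is quadratic in the gradients; so every step gains a factor \<epsilon>^2.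
   All quantities obey derivative bounds C_k \<mu>_0^k, propagated through sums and products by the
   Leibniz rule and through 1/g and sqrt g by bootstrapping the identity \<partial>F = F (F B_1 + B_2).
   When \<epsilon> is too large for the smallness needed at stage j, stage 0 with a larger constant
   does the job. *)

section \<open>Partial derivatives\<close>

lemma Dl_append: "Dl (ds @ es) f = Dl ds (Dl es f)"
  by (induction ds) auto

lemma Dl_snoc: "Dl (ds @ [p]) f = Dl ds (partial p f)"
  by (simp add: Dl_append)

lemma Dl_const: "Dl ds (\<lambda>x. c) = (if ds = [] then (\<lambda>x. c) else (\<lambda>x. 0))"
  by (induction ds) (auto simp: partial_def)

lemma has_real_derivative_along_axis:
  fixes f :: "real^'n::finite \<Rightarrow> real"
  assumes "(f has_derivative f') (at z)" and "z = y + s0 *\<^sub>R axis p 1"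
  shows "((\<lambda>s. f (y + s *\<^sub>R axis p 1)) has_real_derivative f' (axis p 1)) (at s0)"
proof -
  have "((\<lambda>s. y + s *\<^sub>R axis p (1::real)) has_derivative (\<lambda>s. s *\<^sub>R axis p 1)) (at s0)"
    by (auto intro!: derivative_eq_intros)
  then have "((\<lambda>s. f (y + s *\<^sub>R axis p 1)) has_derivative (\<lambda>s. f' (s *\<^sub>R axis p 1))) (at s0)"
    using has_derivative_compose[of "\<lambda>s. y + s *\<^sub>R axis p (1::real)" _ s0 UNIV f f'] assms
    by (simp add: o_def)
  moreover have "(\<lambda>s. f' (s *\<^sub>R axis p 1)) = (\<lambda>s. f' (axis p 1) * s)"
    using assms has_derivative_linear linear_cmul by fastforce
  ultimately show ?thesis by (simp add: has_field_derivative_def)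
qed

lemma partial_eq_derivative:
  fixes f :: "real^'n::finite \<Rightarrow> real"
  assumes "(f has_derivative f') (at x)"
  shows "partial p f x = f' (axis p 1)"
  unfolding partial_def
  by (rule DERIV_imp_deriv, rule has_real_derivative_along_axis[OF assms]) simp

lemma has_real_derivative_partial:
  fixes f :: "real^'n::finite \<Rightarrow> real"
  assumes "f differentiable (at x)"
  shows "((\<lambda>s. f (x + s *\<^sub>R axis p 1)) has_real_derivative partial p f x) (at 0)"
proof -
  obtain f' where f': "(f has_derivative f') (at x)" using assms unfolding differentiable_def by blast
  show ?thesis using has_real_derivative_along_axis[OF f', of x 0 p] partial_eq_derivative[OF f'] by simp
qed

lemma has_real_derivative_partial_along_axis:
  fixes f :: "real^'n::finite \<Rightarrow> real"
  assumes "f differentiable (at (y + s *\<^sub>R axis p 1))"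
  shows "((\<lambda>s. f (y + s *\<^sub>R axis p 1)) has_real_derivative partial p f (y + s *\<^sub>R axis p 1)) (at s)"
proof -
  obtain f' where f': "(f has_derivative f') (at (y + s *\<^sub>R axis p 1))"
    using assms unfolding differentiable_def by blast
  show ?thesis using has_real_derivative_along_axis[OF f' refl] partial_eq_derivative[OF f'] by simp
qed

lemma partial_eq_on_open:
  assumes "open S" "x \<in> S" "\<And>y. y \<in> S \<Longrightarrow> f y = g y"
  shows "partial p f x = partial p g x"
  unfolding partial_def
proof (rule deriv_cong_ev[OF _ refl])
  have "open ((\<lambda>t::real. x + t *\<^sub>R axis p 1) -` S)"
    by (rule open_vimage[OF assms(1)], intro continuous_intros)
  moreover have "0 \<in> (\<lambda>t::real. x + t *\<^sub>R axis p 1) -` S" using assms by simp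
  ultimately show "\<forall>\<^sub>F t in nhds 0. f (x + t *\<^sub>R axis p 1) = g (x + t *\<^sub>R axis p 1)"
    unfolding eventually_nhds using assms by blast
qed

lemma Dl_eq_on_open:
  assumes "open S" "x \<in> S" "\<And>y. y \<in> S \<Longrightarrow> f y = g y"
  shows "Dl ds f x = Dl ds g x"
  using assms(2)
proof (induction ds arbitrary: x)
  case Nil
  then show ?case using assms by simp
next
  case (Cons p ds)
  then show ?case using partial_eq_on_open[OF assms(1) Cons.prems, of "Dl ds f" "Dl ds g"] by simp
qed

lemma partial_comp:
  fixes f :: "real^'n::finite \<Rightarrow> real"
  assumes "f differentiable (at x)" "DERIV \<phi> (f x) :> d"
  shows "partial p (\<lambda>y. \<phi> (f y)) x = d * partial p f x"
  unfolding partial_def[of p "\<lambda>y. \<phi> (f y)"]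
  by (rule DERIV_imp_deriv, rule DERIV_chain2[OF _ has_real_derivative_partial[OF assms(1)]])
     (use assms(2) in simp)

lemma partial_mult:
  fixes f :: "real^'n::finite \<Rightarrow> real"
  assumes "f differentiable (at x)" "g differentiable (at x)"
  shows "partial p (\<lambda>y. f y * g y) x = partial p f x * g x + f x * partial p g x"
  unfolding partial_def[of p "\<lambda>y. f y * g y"]
  by (rule DERIV_imp_deriv)
     (use DERIV_mult[OF has_real_derivative_partial[OF assms(1)] has_real_derivative_partial[OF assms(2)]]
       in \<open>simp add: mult.commute\<close>)

lemma partial_add:
  fixes f :: "real^'n::finite \<Rightarrow> real"
  assumes "f differentiable (at x)" "g differentiable (at x)"
  shows "partial p (\<lambda>y. f y + g y) x = partial p f x + partial p g x"
  unfolding partial_def[of p "\<lambda>y. f y + g y"]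
  by (rule DERIV_imp_deriv)
     (use DERIV_add[OF has_real_derivative_partial[OF assms(1)] has_real_derivative_partial[OF assms(2)]]
       in simp)

lemma partial_diff:
  fixes f :: "real^'n::finite \<Rightarrow> real"
  assumes "f differentiable (at x)" "g differentiable (at x)"
  shows "partial p (\<lambda>y. f y - g y) x = partial p f x - partial p g x"
  unfolding partial_def[of p "\<lambda>y. f y - g y"]
  by (rule DERIV_imp_deriv)
     (use DERIV_diff[OF has_real_derivative_partial[OF assms(1)] has_real_derivative_partial[OF assms(2)]]
       in simp)

lemma partial_cmult:
  fixes f :: "real^'n::finite \<Rightarrow> real"
  assumes "f differentiable (at x)"
  shows "partial p (\<lambda>y. c * f y) x = c * partial p f x"
  using partial_comp[OF assms, of "\<lambda>z. c * z" c p] by (auto intro!: derivative_eq_intros)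

lemma partial_sum:
  fixes f :: "'i \<Rightarrow> real^'n::finite \<Rightarrow> real"
  assumes "finite I" "\<And>i. i \<in> I \<Longrightarrow> f i differentiable (at x)"
  shows "partial p (\<lambda>y. \<Sum>i\<in>I. f i y) x = (\<Sum>i\<in>I. partial p (f i) x)"
  unfolding partial_def[of p "\<lambda>y. \<Sum>i\<in>I. f i y"]
  by (rule DERIV_imp_deriv, rule DERIV_sum) (use has_real_derivative_partial assms(2) in blast)

lemma partial_sum_list:
  fixes F :: "'i \<Rightarrow> real^'n::finite \<Rightarrow> real"
  assumes "\<And>i. i \<in> set L \<Longrightarrow> F i differentiable (at x)"
  shows "partial p (\<lambda>y. \<Sum>i\<leftarrow>L. F i y) x = (\<Sum>i\<leftarrow>L. partial p (F i) x)"
  using assms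
proof (induction L)
  case Nil
  then show ?case using partial_cmult[of "\<lambda>y. 0" x p 0] by simp
next
  case (Cons a L)
  have "(\<lambda>y. \<Sum>i\<leftarrow>L. F i y) differentiable (at x)"
    using Cons.prems by (induction L) (auto intro!: differentiable_add)
  then show ?case using partial_add[OF Cons.prems[of a]] Cons by simp
qed

text \<open>All ways of distributing a list of directions between two factors, in the Leibniz rule.\<close>

fun splits :: "'a list \<Rightarrow> ('a list \<times> 'a list) list" where
  "splits [] = [([], [])]"
| "splits (p # ds) = map (\<lambda>ab. (p # fst ab, snd ab)) (splits ds) @ map (\<lambda>ab. (fst ab, p # snd ab)) (splits ds)"

lemma length_splits: "length (splits ds) = 2 ^ length ds"
  by (induction ds) auto

lemma splits_length: "ab \<in> set (splits ds) \<Longrightarrow> length (fst ab) + length (snd ab) = length ds"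
  by (induction ds arbitrary: ab) auto

lemma Dl_mult:
  fixes f g :: "real^'n::finite \<Rightarrow> real"
  assumes S: "open S" and x: "x \<in> S"
    and df: "\<And>as. length as < length ds \<Longrightarrow> Dl as f differentiable_on S"
    and dg: "\<And>bs. length bs < length ds \<Longrightarrow> Dl bs g differentiable_on S"
  shows "Dl ds (\<lambda>y. f y * g y) x = (\<Sum>ab\<leftarrow>splits ds. Dl (fst ab) f x * Dl (snd ab) g x)"
  using x df dg
proof (induction ds arbitrary: x)
  case Nil
  then show ?case by simp
next
  case (Cons p ds)
  have IH: "\<And>y. y \<in> S \<Longrightarrow> Dl ds (\<lambda>y. f y * g y) y = (\<Sum>ab\<leftarrow>splits ds. Dl (fst ab) f y * Dl (snd ab) g y)"
    using Cons by simp
  have diff: "\<And>as. length as \<le> length ds \<Longrightarrow> Dl as f differentiable (at x) \<and> Dl as g differentiable (at x)"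
    using Cons.prems S by (auto simp: differentiable_on_eq_differentiable_at)
  have "Dl (p # ds) (\<lambda>y. f y * g y) x = partial p (\<lambda>y. \<Sum>ab\<leftarrow>splits ds. Dl (fst ab) f y * Dl (snd ab) g y) x"
    using partial_eq_on_open[OF S Cons.prems(1) IH] by simp
  also have "\<dots> = (\<Sum>ab\<leftarrow>splits ds. partial p (\<lambda>y. Dl (fst ab) f y * Dl (snd ab) g y) x)"
    by (rule partial_sum_list) (use diff splits_length in \<open>fastforce intro!: differentiable_mult\<close>)
  also have "\<dots> = (\<Sum>ab\<leftarrow>splits ds. Dl (p # fst ab) f x * Dl (snd ab) g x + Dl (fst ab) f x * Dl (p # snd ab) g x)"
    by (rule arg_cong[where f=sum_list], rule map_cong[OF refl], subst partial_mult)
       (use diff splits_length in \<open>fastforce+\<close>)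
  also have "\<dots> = (\<Sum>ab\<leftarrow>splits (p # ds). Dl (fst ab) f x * Dl (snd ab) g x)"
    by (simp add: sum_list_addf o_def)
  finally show ?case .
qed

lemma Dl_sum:
  fixes f :: "'i \<Rightarrow> real^'n::finite \<Rightarrow> real"
  assumes S: "open S" and x: "x \<in> S" and I: "finite I"
    and df: "\<And>i as. i \<in> I \<Longrightarrow> length as < length ds \<Longrightarrow> Dl as (f i) differentiable_on S"
  shows "Dl ds (\<lambda>y. \<Sum>i\<in>I. f i y) x = (\<Sum>i\<in>I. Dl ds (f i) x)"
  using x df
proof (induction ds arbitrary: x)
  case Nil
  then show ?case by simp
next
  case (Cons p ds)
  have IH: "\<And>y. y \<in> S \<Longrightarrow> Dl ds (\<lambda>y. \<Sum>i\<in>I. f i y) y = (\<Sum>i\<in>I. Dl ds (f i) y)"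
    using Cons by simp
  have "Dl (p # ds) (\<lambda>y. \<Sum>i\<in>I. f i y) x = partial p (\<lambda>y. \<Sum>i\<in>I. Dl ds (f i) y) x"
    using partial_eq_on_open[OF S Cons.prems(1) IH] by simp
  also have "\<dots> = (\<Sum>i\<in>I. partial p (Dl ds (f i)) x)"
    by (rule partial_sum[OF I]) (use Cons.prems S in \<open>auto simp: differentiable_on_eq_differentiable_at\<close>)
  finally show ?case by simp
qed

lemma Dl_cmult:
  fixes f :: "real^'n::finite \<Rightarrow> real"
  assumes S: "open S" and x: "x \<in> S"
    and df: "\<And>as. length as < length ds \<Longrightarrow> Dl as f differentiable_on S"
  shows "Dl ds (\<lambda>y. c * f y) x = c * Dl ds f x"
  using x df
proof (induction ds arbitrary: x)
  case Nil
  then show ?case by simp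
next
  case (Cons p ds)
  have IH: "\<And>y. y \<in> S \<Longrightarrow> Dl ds (\<lambda>y. c * f y) y = c * Dl ds f y"
    using Cons by simp
  have "Dl (p # ds) (\<lambda>y. c * f y) x = partial p (\<lambda>y. c * Dl ds f y) x"
    using partial_eq_on_open[OF S Cons.prems(1) IH] by simp
  also have "\<dots> = c * partial p (Dl ds f) x"
    by (rule partial_cmult) (use Cons.prems S in \<open>auto simp: differentiable_on_eq_differentiable_at\<close>)
  finally show ?case by simp
qed

lemma uniformly_continuous_on_transform:
  fixes f g :: "'a::metric_space \<Rightarrow> 'b::metric_space"
  assumes "uniformly_continuous_on S f" "\<And>y. y \<in> S \<Longrightarrow> f y = g y"
  shows "uniformly_continuous_on S g"
  unfolding uniformly_continuous_on_def
proof (intro allI impI)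
  fix e :: real assume "e > 0"
  then obtain d where "d > 0" "\<forall>x\<in>S. \<forall>x'\<in>S. dist x' x < d \<longrightarrow> dist (f x') (f x) < e"
    using assms(1) unfolding uniformly_continuous_on_def by blast
  then show "\<exists>d>0. \<forall>x\<in>S. \<forall>x'\<in>S. dist x' x < d \<longrightarrow> dist (g x') (g x) < e"
    using assms(2) by (intro exI[of _ d]) auto
qed

lemma uniformly_continuous_on_mult_bounded:
  fixes f g :: "'a::metric_space \<Rightarrow> real"
  assumes "uniformly_continuous_on S f" "uniformly_continuous_on S g"
    and "\<And>y. y \<in> S \<Longrightarrow> \<bar>f y\<bar> \<le> B" "\<And>y. y \<in> S \<Longrightarrow> \<bar>g y\<bar> \<le> B"
  shows "uniformly_continuous_on S (\<lambda>y. f y * g y)"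
  unfolding uniformly_continuous_on_def
proof (intro allI impI)
  fix e :: real assume e: "e > 0"
  define B' where "B' = \<bar>B\<bar> + 1"
  have B': "B' > 0" unfolding B'_def by simp
  obtain d1 where d1: "d1 > 0" "\<forall>x\<in>S. \<forall>x'\<in>S. dist x' x < d1 \<longrightarrow> dist (f x') (f x) < e / (2* B')"
    using assms(1)[unfolded uniformly_continuous_on_def, rule_format, of "e / (2* B')"] e B' by auto
  obtain d2 where d2: "d2 > 0" "\<forall>x\<in>S. \<forall>x'\<in>S. dist x' x < d2 \<longrightarrow> dist (g x') (g x) < e / (2* B')"
    using assms(2)[unfolded uniformly_continuous_on_def, rule_format, of "e / (2* B')"] e B' by auto
  show "\<exists>d>0. \<forall>x\<in>S. \<forall>x'\<in>S. dist x' x < d \<longrightarrow> dist (f x' * g x') (f x * g x) < e"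
  proof (intro exI[of _ "min d1 d2"] conjI ballI impI)
    show "min d1 d2 > 0" using d1 d2 by simp
    fix x x' assume xs: "x \<in> S" "x' \<in> S" and dd: "dist x' x < min d1 d2"
    have a: "\<bar>f x' - f x\<bar> < e / (2* B')" using d1 xs dd by (auto simp: dist_real_def)
    have b: "\<bar>g x' - g x\<bar> < e / (2* B')" using d2 xs dd by (auto simp: dist_real_def)
    have gb: "\<bar>g x'\<bar> \<le> B'" "\<bar>f x\<bar> \<le> B'" using assms(3,4) xs unfolding B'_def by force+
    have eq: "f x' * g x' - f x * g x = (f x' - f x) * g x' + f x * (g x' - g x)" by (simp add: algebra_simps)
    have t1: "\<bar>f x' - f x\<bar> * \<bar>g x'\<bar> \<le> (e / (2* B')) * B'"
      using a gb by (intro mult_mono) auto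
    have t2a: "\<bar>f x\<bar> * \<bar>g x' - g x\<bar> \<le> B' * \<bar>g x' - g x\<bar>"
      using gb by (intro mult_right_mono) auto
    have t2b: "B' * \<bar>g x' - g x\<bar> < B' * (e / (2* B'))"
      using b B' by (intro mult_strict_left_mono) auto
    have e2: "(e / (2* B')) * B' = e/2" "B' * (e / (2* B')) = e/2" using B' by (auto simp: field_simps)
    have "\<bar>f x' * g x' - f x * g x\<bar> \<le> \<bar>f x' - f x\<bar> * \<bar>g x'\<bar> + \<bar>f x\<bar> * \<bar>g x' - g x\<bar>"
      unfolding eq by (metis abs_mult abs_triangle_ineq)
    then show "dist (f x' * g x') (f x * g x) < e"
      using t1 t2a t2b e2 by (simp add: dist_real_def)
  qed
qed

lemma differentiable_on_transform_open:
  fixes f :: "'a::real_normed_vector \<Rightarrow> 'b::real_normed_vector"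
  assumes "open S" "f differentiable_on S" "\<And>y. y \<in> S \<Longrightarrow> f y = g y"
  shows "g differentiable_on S"
  using assms unfolding differentiable_on_eq_differentiable_at[OF assms(1)] differentiable_def
  using has_derivative_transform_within_open by blast

lemma differentiable_on_sum_list:
  fixes F :: "'i \<Rightarrow> 'a::real_normed_vector \<Rightarrow> real"
  assumes "\<And>i. i \<in> set L \<Longrightarrow> F i differentiable_on S"
  shows "(\<lambda>y. \<Sum>i\<leftarrow>L. F i y) differentiable_on S"
  using assms by (induction L) (auto intro!: differentiable_on_add)

lemma uniformly_continuous_on_sum_list:
  fixes F :: "'i \<Rightarrow> 'a::metric_space \<Rightarrow> real"
  assumes "\<And>i. i \<in> set L \<Longrightarrow> uniformly_continuous_on S (F i)"
  shows "uniformly_continuous_on S (\<lambda>y. \<Sum>i\<leftarrow>L. F i y)"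
  using assms by (induction L) (auto intro!: uniformly_continuous_on_add uniformly_continuous_on_const)

section \<open>Derivative bounds at a frequency scale\<close>

definition mono_nonneg :: "(nat \<Rightarrow> real) \<Rightarrow> bool" where
  "mono_nonneg K \<longleftrightarrow> mono K \<and> (\<forall>i. 0 \<le> K i)"

lemma mono_nonneg_nonneg: "mono_nonneg K \<Longrightarrow> 0 \<le> K i"
  by (simp add: mono_nonneg_def)

lemma mono_nonneg_le: "mono_nonneg K \<Longrightarrow> i \<le> j \<Longrightarrow> K i \<le> K j"
  by (simp add: mono_nonneg_def mono_def)

lemma mono_nonneg_const: "0 \<le> c \<Longrightarrow> mono_nonneg (\<lambda>i. c)"
  unfolding mono_nonneg_def mono_def by auto

lemma mono_nonneg_shift: "mono_nonneg K \<Longrightarrow> mono_nonneg (\<lambda>i. K (Suc i))"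
  unfolding mono_nonneg_def mono_def by auto

lemma mono_nonneg_add: "mono_nonneg K1 \<Longrightarrow> mono_nonneg K2 \<Longrightarrow> mono_nonneg (\<lambda>i. K1 i + K2 i)"
  unfolding mono_nonneg_def mono_def by (auto intro!: add_mono)

lemma mono_nonneg_cmult: "mono_nonneg K \<Longrightarrow> 0 \<le> c \<Longrightarrow> mono_nonneg (\<lambda>i. c * K i)"
  unfolding mono_nonneg_def mono_def by (auto intro!: mult_left_mono)

lemma mono_nonneg_Leibniz: "mono_nonneg K1 \<Longrightarrow> mono_nonneg K2 \<Longrightarrow> mono_nonneg (\<lambda>i. 2 ^ i * K1 i * K2 i)"
  unfolding mono_nonneg_def mono_def by (auto intro!: mult_mono power_increasing)

text \<open>s is an amplitude, W a frequency scale (\<mu> 0 in the theorem) and K k a constant depending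
  only on the order k of the derivative.\<close>

definition deriv_bounds_upto ::
    "(real^'n::finite) set \<Rightarrow> real \<Rightarrow> nat \<Rightarrow> real \<Rightarrow> (nat \<Rightarrow> real) \<Rightarrow> (real^'n \<Rightarrow> real) \<Rightarrow> bool" where
  "deriv_bounds_upto S W m s K f \<longleftrightarrow> (\<forall>ds. length ds \<le> m \<longrightarrow>
     Dl ds f differentiable_on S \<and> uniformly_continuous_on S (Dl ds f) \<and>
     (\<forall>x\<in>S. \<bar>Dl ds f x\<bar> \<le> s * K (length ds) * W ^ length ds))"

definition deriv_bounds ::
    "(real^'n::finite) set \<Rightarrow> real \<Rightarrow> real \<Rightarrow> (nat \<Rightarrow> real) \<Rightarrow> (real^'n \<Rightarrow> real) \<Rightarrow> bool" where
  "deriv_bounds S W s K f \<longleftrightarrow> (\<forall>m. deriv_bounds_upto S W m s K f)"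

lemma deriv_bounds_uptoI:
  assumes "\<And>ds. length ds \<le> m \<Longrightarrow> Dl ds f differentiable_on S"
    and "\<And>ds. length ds \<le> m \<Longrightarrow> uniformly_continuous_on S (Dl ds f)"
    and "\<And>ds x. length ds \<le> m \<Longrightarrow> x \<in> S \<Longrightarrow> \<bar>Dl ds f x\<bar> \<le> s * K (length ds) * W ^ length ds"
  shows "deriv_bounds_upto S W m s K f"
  using assms unfolding deriv_bounds_upto_def by blast

lemma deriv_bounds_uptoD:
  assumes "deriv_bounds_upto S W m s K f" "length ds \<le> m"
  shows "Dl ds f differentiable_on S" "uniformly_continuous_on S (Dl ds f)"
    and "\<And>x. x \<in> S \<Longrightarrow> \<bar>Dl ds f x\<bar> \<le> s * K (length ds) * W ^ length ds"
  using assms unfolding deriv_bounds_upto_def by blast+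

lemma deriv_bounds_upto_le_order:
  assumes "deriv_bounds_upto S W m s K f" "mono_nonneg K" "0 \<le> s" "0 \<le> W"
    and "length ds \<le> l" "l \<le> m" "x \<in> S"
  shows "\<bar>Dl ds f x\<bar> \<le> s * K l * W ^ length ds"
proof -
  have "\<bar>Dl ds f x\<bar> \<le> s * K (length ds) * W ^ length ds"
    by (rule deriv_bounds_uptoD(3)[OF assms(1) _ assms(7)]) (use assms(5,6) in linarith)
  also have "\<dots> \<le> s * K l * W ^ length ds"
    using assms by (intro mult_right_mono mult_left_mono mono_nonneg_le) auto
  finally show ?thesis .
qed

lemma deriv_bounds_upto_cong:
  assumes S: "open S" and eq: "\<And>y. y \<in> S \<Longrightarrow> f y = g y" and f: "deriv_bounds_upto S W m s K f"
  shows "deriv_bounds_upto S W m s K g"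
proof -
  have "\<And>ds y. y \<in> S \<Longrightarrow> Dl ds f y = Dl ds g y" using Dl_eq_on_open[OF S] eq by blast
  then show ?thesis
    using f differentiable_on_transform_open[OF S] uniformly_continuous_on_transform
    unfolding deriv_bounds_upto_def by metis
qed

lemma deriv_bounds_upto_mono:
  assumes "deriv_bounds_upto S W m s K f" "s \<le> s'" "\<And>i. K i \<le> K' i" "0 \<le> s" "\<And>i. 0 \<le> K i" "0 \<le> W"
  shows "deriv_bounds_upto S W m s' K' f"
proof -
  have "\<And>l. s * K l * W ^ l \<le> s' * K' l * W ^ l"
    using assms(2-6) by (intro mult_right_mono mult_mono) auto
  then show ?thesis using assms(1) unfolding deriv_bounds_upto_def by (meson order_trans)
qed

lemma deriv_bounds_upto_partial:
  fixes f :: "real^'n::finite \<Rightarrow> real"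
  assumes "deriv_bounds_upto S W (Suc m) s K f"
  shows "deriv_bounds_upto S W m (s * W) (\<lambda>i. K (Suc i)) (partial p f)"
proof (rule deriv_bounds_uptoI)
  fix ds :: "'n list" assume ds: "length ds \<le> m"
  then show "Dl ds (partial p f) differentiable_on S" "uniformly_continuous_on S (Dl ds (partial p f))"
    using deriv_bounds_uptoD(1,2)[OF assms, of "ds @ [p]"] by (simp_all add: Dl_snoc)
  fix x assume "x \<in> S"
  then show "\<bar>Dl ds (partial p f) x\<bar> \<le> s * W * K (Suc (length ds)) * W ^ length ds"
    using deriv_bounds_uptoD(3)[OF assms, of "ds @ [p]"] ds by (simp add: Dl_snoc algebra_simps)
qed

lemma deriv_bounds_upto_uniform:
  assumes f: "deriv_bounds_upto S W m s K f" and K: "mono_nonneg K" and s: "0 \<le> s" and W: "1 \<le> W"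
    and ds: "length ds \<le> m" and x: "x \<in> S"
  shows "\<bar>Dl ds f x\<bar> \<le> s * K m * W ^ m"
proof -
  have "\<bar>Dl ds f x\<bar> \<le> s * K m * W ^ length ds"
    using deriv_bounds_upto_le_order[OF f K s _ ds order_refl x] W by simp
  also have "\<dots> \<le> s * K m * W ^ m"
    using W ds s K by (intro mult_left_mono power_increasing) (auto simp: mono_nonneg_nonneg)
  finally show ?thesis .
qed

lemma abs_Dl_mult_le:
  fixes f g :: "real^'n::finite \<Rightarrow> real"
  assumes S: "open S" and W: "1 \<le> W" and s: "0 \<le> s1" "0 \<le> s2" and K: "mono_nonneg K1" "mono_nonneg K2"
    and f: "deriv_bounds_upto S W m s1 K1 f" and g: "deriv_bounds_upto S W m s2 K2 g"
    and ds: "length ds \<le> m" and x: "x \<in> S"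
  shows "\<bar>Dl ds (\<lambda>y. f y * g y) x\<bar> \<le> s1 * s2 * (2 ^ length ds * K1 (length ds) * K2 (length ds)) * W ^ length ds"
proof -
  let ?l = "length ds"
  have "\<bar>Dl (fst ab) f x * Dl (snd ab) g x\<bar> \<le> s1 * s2 * K1 ?l * K2 ?l * W ^ ?l"
    if ab: "ab \<in> set (splits ds)" for ab
  proof -
    have "\<bar>Dl (fst ab) f x * Dl (snd ab) g x\<bar>
        \<le> (s1 * K1 ?l * W ^ length (fst ab)) * (s2 * K2 ?l * W ^ length (snd ab))"
      unfolding abs_mult using splits_length[OF ab] ds x W s K
      by (intro mult_mono deriv_bounds_upto_le_order[OF f K(1)] deriv_bounds_upto_le_order[OF g K(2)])
         (auto simp: mono_nonneg_nonneg)
    also have "\<dots> = s1 * s2 * K1 ?l * K2 ?l * W ^ ?l"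
      using splits_length[OF ab] by (simp add: power_add[symmetric])
    finally show ?thesis .
  qed
  then have "(\<Sum>ab\<leftarrow>splits ds. \<bar>Dl (fst ab) f x * Dl (snd ab) g x\<bar>)
      \<le> (\<Sum>ab\<leftarrow>splits ds. s1 * s2 * K1 ?l * K2 ?l * W ^ ?l)"
    by (rule sum_list_mono)
  then have "\<bar>\<Sum>ab\<leftarrow>splits ds. Dl (fst ab) f x * Dl (snd ab) g x\<bar> \<le> (\<Sum>ab\<leftarrow>splits ds. s1 * s2 * K1 ?l * K2 ?l * W ^ ?l)"
    using sum_list_abs[of "map (\<lambda>ab. Dl (fst ab) f x * Dl (snd ab) g x) (splits ds)"]
    by (simp add: o_def)
  then show ?thesis
    using Dl_mult[OF S x deriv_bounds_uptoD(1)[OF f] deriv_bounds_uptoD(1)[OF g]] ds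
    by (simp add: sum_list_triv length_splits algebra_simps)
qed

lemma deriv_bounds_upto_mult:
  fixes f g :: "real^'n::finite \<Rightarrow> real"
  assumes S: "open S" and W: "1 \<le> W" and s: "0 \<le> s1" "0 \<le> s2" and K: "mono_nonneg K1" "mono_nonneg K2"
    and f: "deriv_bounds_upto S W m s1 K1 f" and g: "deriv_bounds_upto S W m s2 K2 g"
  shows "deriv_bounds_upto S W m (s1 * s2) (\<lambda>i. 2 ^ i * K1 i * K2 i) (\<lambda>y. f y * g y)"
proof (rule deriv_bounds_uptoI)
  fix ds :: "'n list" assume ds: "length ds \<le> m"
  let ?T = "\<lambda>y. \<Sum>ab\<leftarrow>splits ds. Dl (fst ab) f y * Dl (snd ab) g y"
  have len: "length (fst ab) \<le> m" "length (snd ab) \<le> m" if "ab \<in> set (splits ds)" for ab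
    using splits_length[OF that] ds by auto
  have L: "\<And>y. y \<in> S \<Longrightarrow> ?T y = Dl ds (\<lambda>y. f y * g y) y"
    using Dl_mult[OF S _ deriv_bounds_uptoD(1)[OF f] deriv_bounds_uptoD(1)[OF g]] ds by force
  have fg: "Dl (fst ab) f differentiable_on S" "Dl (snd ab) g differentiable_on S"
      "uniformly_continuous_on S (Dl (fst ab) f)" "uniformly_continuous_on S (Dl (snd ab) g)"
    if "ab \<in> set (splits ds)" for ab
    using deriv_bounds_uptoD(1,2)[OF f] deriv_bounds_uptoD(1,2)[OF g] len[OF that] by auto
  show "Dl ds (\<lambda>y. f y * g y) differentiable_on S"
    by (rule differentiable_on_transform_open[OF S _ L], rule differentiable_on_sum_list)
       (auto intro!: differentiable_on_mult dest: fg)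
  define B where "B = s1 * K1 m * W ^ m + s2 * K2 m * W ^ m"
  have "0 \<le> s1 * K1 m * W ^ m" "0 \<le> s2 * K2 m * W ^ m"
    using s K W by (auto simp: mono_nonneg_nonneg)
  then have B: "\<bar>Dl as f y\<bar> \<le> B" "\<bar>Dl as g y\<bar> \<le> B" if "length as \<le> m" "y \<in> S" for as y
    using deriv_bounds_upto_uniform[OF f K(1) s(1) W that] deriv_bounds_upto_uniform[OF g K(2) s(2) W that]
    unfolding B_def by linarith+
  have "uniformly_continuous_on S (\<lambda>y. Dl (fst ab) f y * Dl (snd ab) g y)" if "ab \<in> set (splits ds)" for ab
    using fg[OF that] B len[OF that] by (intro uniformly_continuous_on_mult_bounded[where B=B]) auto
  then show "uniformly_continuous_on S (Dl ds (\<lambda>y. f y * g y))"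
    by (rule uniformly_continuous_on_transform[OF uniformly_continuous_on_sum_list L])
  show "\<And>x. x \<in> S \<Longrightarrow> \<bar>Dl ds (\<lambda>y. f y * g y) x\<bar> \<le> s1 * s2 * (2 ^ length ds * K1 (length ds) * K2 (length ds)) * W ^ length ds"
    by (rule abs_Dl_mult_le[OF S W s K f g ds])
qed

lemma deriv_bounds_upto_sum:
  fixes f :: "'i \<Rightarrow> real^'n::finite \<Rightarrow> real"
  assumes S: "open S" and I: "finite I" and s: "0 \<le> s"
    and f: "\<And>i. i \<in> I \<Longrightarrow> deriv_bounds_upto S W m s (K i) (f i)"
  shows "deriv_bounds_upto S W m s (\<lambda>l. \<Sum>i\<in>I. K i l) (\<lambda>y. \<Sum>i\<in>I. f i y)"
proof (rule deriv_bounds_uptoI)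
  fix ds :: "'n list" assume ds: "length ds \<le> m"
  have L: "\<And>y. y \<in> S \<Longrightarrow> (\<Sum>i\<in>I. Dl ds (f i) y) = Dl ds (\<lambda>y. \<Sum>i\<in>I. f i y) y"
    using Dl_sum[OF S _ I] deriv_bounds_uptoD(1)[OF f] ds by force
  show "Dl ds (\<lambda>y. \<Sum>i\<in>I. f i y) differentiable_on S"
    by (rule differentiable_on_transform_open[OF S _ L])
       (use deriv_bounds_uptoD(1)[OF f] ds I in \<open>auto intro!: differentiable_sum simp: differentiable_on_def\<close>)
  show "uniformly_continuous_on S (Dl ds (\<lambda>y. \<Sum>i\<in>I. f i y))"
    by (rule uniformly_continuous_on_transform[OF _ L], rule uniformly_continuous_on_sum)
       (use deriv_bounds_uptoD(2)[OF f] ds in auto)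
  fix x assume x: "x \<in> S"
  have "\<bar>\<Sum>i\<in>I. Dl ds (f i) x\<bar> \<le> (\<Sum>i\<in>I. \<bar>Dl ds (f i) x\<bar>)" by (rule sum_abs)
  also have "\<dots> \<le> (\<Sum>i\<in>I. s * K i (length ds) * W ^ length ds)"
    by (rule sum_mono) (use deriv_bounds_uptoD(3)[OF f] ds x in auto)
  also have "\<dots> = s * (\<Sum>i\<in>I. K i (length ds)) * W ^ length ds"
    by (simp add: sum_distrib_left sum_distrib_right)
  finally show "\<bar>Dl ds (\<lambda>y. \<Sum>i\<in>I. f i y) x\<bar> \<le> s * (\<Sum>i\<in>I. K i (length ds)) * W ^ length ds"
    using L[OF x] by simp
qed

lemma deriv_bounds_upto_cmult:
  fixes f :: "real^'n::finite \<Rightarrow> real"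
  assumes S: "open S" and f: "deriv_bounds_upto S W m s K f"
  shows "deriv_bounds_upto S W m (\<bar>c\<bar> * s) K (\<lambda>y. c * f y)"
proof (rule deriv_bounds_uptoI)
  fix ds :: "'n list" assume ds: "length ds \<le> m"
  have L: "\<And>y. y \<in> S \<Longrightarrow> c * Dl ds f y = Dl ds (\<lambda>y. c * f y) y"
    using Dl_cmult[OF S] deriv_bounds_uptoD(1)[OF f] ds by force
  show "Dl ds (\<lambda>y. c * f y) differentiable_on S"
    by (rule differentiable_on_transform_open[OF S _ L])
       (use deriv_bounds_uptoD(1)[OF f ds] in \<open>auto intro!: differentiable_on_mult\<close>)
  show "uniformly_continuous_on S (Dl ds (\<lambda>y. c * f y))"
    by (rule uniformly_continuous_on_transform[OF _ L], rule uniformly_continuous_on_cmul_left)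
       (rule deriv_bounds_uptoD(2)[OF f ds])
  fix x assume x: "x \<in> S"
  have "\<bar>c * Dl ds f x\<bar> \<le> \<bar>c\<bar> * (s * K (length ds) * W ^ length ds)"
    unfolding abs_mult by (intro mult_left_mono deriv_bounds_uptoD(3)[OF f ds x]) auto
  then show "\<bar>Dl ds (\<lambda>y. c * f y) x\<bar> \<le> \<bar>c\<bar> * s * K (length ds) * W ^ length ds"
    using L[OF x] by (simp add: algebra_simps)
qed

lemma deriv_bounds_upto_Suc:
  fixes F :: "real^'n::finite \<Rightarrow> real"
  assumes S: "open S" and F: "deriv_bounds_upto S W m s K F"
    and \<Phi>: "\<And>p. deriv_bounds_upto S W m s' K' (\<Phi> p)"
    and eq: "\<And>p y. y \<in> S \<Longrightarrow> partial p F y = \<Phi> p y"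
    and le: "s' * K' m * W ^ m \<le> s * K (Suc m) * W ^ Suc m"
  shows "deriv_bounds_upto S W (Suc m) s K F"
proof (rule deriv_bounds_uptoI)
  fix ds :: "'n list" assume ds: "length ds \<le> Suc m"
  have "(Dl ds F differentiable_on S \<and> uniformly_continuous_on S (Dl ds F)) \<and>
      (\<forall>x\<in>S. \<bar>Dl ds F x\<bar> \<le> s * K (length ds) * W ^ length ds)"
  proof (cases "length ds \<le> m")
    case True
    then show ?thesis using deriv_bounds_uptoD[OF F] by blast
  next
    case False
    then have "ds \<noteq> []" by auto
    then obtain ds' p where ds': "ds = ds' @ [p]" by (metis rev_exhaust)
    have m: "length ds' = m" using False ds ds' by simp
    have L: "\<And>y. y \<in> S \<Longrightarrow> Dl ds' (\<Phi> p) y = Dl ds F y"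
      unfolding ds' Dl_snoc using Dl_eq_on_open[OF S, where f="\<Phi> p" and g="partial p F"] eq by metis
    have \<Phi>': "Dl ds' (\<Phi> p) differentiable_on S" "uniformly_continuous_on S (Dl ds' (\<Phi> p))"
      "\<And>x. x \<in> S \<Longrightarrow> \<bar>Dl ds' (\<Phi> p) x\<bar> \<le> s' * K' m * W ^ m"
      using deriv_bounds_uptoD[OF \<Phi>[of p], of ds'] m by auto
    show ?thesis
    proof (intro conjI ballI)
      show "Dl ds F differentiable_on S" by (rule differentiable_on_transform_open[OF S \<Phi>'(1) L])
      show "uniformly_continuous_on S (Dl ds F)" by (rule uniformly_continuous_on_transform[OF \<Phi>'(2) L])
      fix x assume "x \<in> S"
      then show "\<bar>Dl ds F x\<bar> \<le> s * K (length ds) * W ^ length ds"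
        using \<Phi>'(3)[of x] L[of x] le ds' m by simp
    qed
  qed
  then show "Dl ds F differentiable_on S" "uniformly_continuous_on S (Dl ds F)"
    "\<And>x. x \<in> S \<Longrightarrow> \<bar>Dl ds F x\<bar> \<le> s * K (length ds) * W ^ length ds" by blast+
qed

lemma deriv_boundsI: "(\<And>m. deriv_bounds_upto S W m s K f) \<Longrightarrow> deriv_bounds S W s K f"
  by (simp add: deriv_bounds_def)

lemma deriv_bounds_mult:
  fixes f g :: "real^'n::finite \<Rightarrow> real"
  assumes "open S" "1 \<le> W" "0 \<le> s1" "0 \<le> s2" "mono_nonneg K1" "mono_nonneg K2"
    and "deriv_bounds S W s1 K1 f" "deriv_bounds S W s2 K2 g"
  shows "deriv_bounds S W (s1 * s2) (\<lambda>i. 2 ^ i * K1 i * K2 i) (\<lambda>y. f y * g y)"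
  using deriv_bounds_upto_mult assms unfolding deriv_bounds_def by blast

lemma deriv_bounds_sum:
  fixes f :: "'i \<Rightarrow> real^'n::finite \<Rightarrow> real"
  assumes "open S" "finite I" "0 \<le> s" "\<And>i. i \<in> I \<Longrightarrow> deriv_bounds S W s (K i) (f i)"
  shows "deriv_bounds S W s (\<lambda>l. \<Sum>i\<in>I. K i l) (\<lambda>y. \<Sum>i\<in>I. f i y)"
  using deriv_bounds_upto_sum assms unfolding deriv_bounds_def by blast

lemma deriv_bounds_add:
  fixes f g :: "real^'n::finite \<Rightarrow> real"
  assumes "open S" "0 \<le> s" "deriv_bounds S W s K1 f" "deriv_bounds S W s K2 g"
  shows "deriv_bounds S W s (\<lambda>l. K1 l + K2 l) (\<lambda>y. f y + g y)"
  using deriv_bounds_sum[OF assms(1) _ assms(2), where I="{True, False}"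
      and K="\<lambda>i. if i then K1 else K2" and f="\<lambda>i. if i then f else g"] assms(3,4)
  by simp

lemma deriv_bounds_cmult:
  fixes f :: "real^'n::finite \<Rightarrow> real"
  assumes "open S" "deriv_bounds S W s K f"
  shows "deriv_bounds S W (\<bar>c\<bar> * s) K (\<lambda>y. c * f y)"
  using deriv_bounds_upto_cmult assms unfolding deriv_bounds_def by blast

lemma deriv_bounds_mono:
  assumes "deriv_bounds S W s K f" "s \<le> s'" "\<And>i. K i \<le> K' i" "0 \<le> s" "\<And>i. 0 \<le> K i" "0 \<le> W"
  shows "deriv_bounds S W s' K' f"
  using deriv_bounds_upto_mono assms unfolding deriv_bounds_def by blast

lemma deriv_bounds_rescale:
  assumes "0 \<le> c" "deriv_bounds S W (c * s) K f"
  shows "deriv_bounds S W s (\<lambda>l. c * K l) f"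
  using assms unfolding deriv_bounds_def deriv_bounds_upto_def by (simp add: algebra_simps)

lemma deriv_bounds_cong:
  assumes "open S" "\<And>y. y \<in> S \<Longrightarrow> f y = g y" "deriv_bounds S W s K f"
  shows "deriv_bounds S W s K g"
  using deriv_bounds_upto_cong assms unfolding deriv_bounds_def by blast

lemma deriv_bounds_partial:
  fixes f :: "real^'n::finite \<Rightarrow> real"
  assumes "deriv_bounds S W s K f"
  shows "deriv_bounds S W (s * W) (\<lambda>i. K (Suc i)) (partial p f)"
  using deriv_bounds_upto_partial assms unfolding deriv_bounds_def by blast

lemma deriv_bounds_zero: "deriv_bounds S W s (\<lambda>_. 0) (\<lambda>y::real^'n::finite. 0)"
  unfolding deriv_bounds_def deriv_bounds_upto_def
  by (auto simp: Dl_const intro: uniformly_continuous_on_const)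

lemma deriv_bounds_differentiable_on: "deriv_bounds S W s K f \<Longrightarrow> f differentiable_on S"
  using deriv_bounds_uptoD(1)[of S W 0 s K f "[]"] by (simp add: deriv_bounds_def)

lemma deriv_bounds_uniformly_continuous_on: "deriv_bounds S W s K f \<Longrightarrow> uniformly_continuous_on S f"
  using deriv_bounds_uptoD(2)[of S W 0 s K f "[]"] by (simp add: deriv_bounds_def)

lemma deriv_bounds_abs_le: "deriv_bounds S W s K f \<Longrightarrow> x \<in> S \<Longrightarrow> \<bar>f x\<bar> \<le> s * K 0"
  using deriv_bounds_uptoD(3)[of S W 0 s K f "[]" x] by (simp add: deriv_bounds_def)

lemma smooth_cl_deriv_bounds: "deriv_bounds S W s K f \<Longrightarrow> smooth_cl S f"
  unfolding smooth_cl_def deriv_bounds_def deriv_bounds_upto_def by (meson order_refl)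

section \<open>Bootstrapping derivative bounds\<close>

text \<open>If \<partial>F = F (F B1 + B2) with B1, B2 controlled by K1, K2, the Leibniz rule bounds the
  derivatives of F of order m + 1 by those of order at most m; these are the resulting constants.\<close>

primrec bootstrap_consts :: "real \<Rightarrow> (nat \<Rightarrow> real) \<Rightarrow> (nat \<Rightarrow> real) \<Rightarrow> nat \<Rightarrow> real" where
  "bootstrap_consts c0 K1 K2 0 = c0"
| "bootstrap_consts c0 K1 K2 (Suc m) = max (bootstrap_consts c0 K1 K2 m)
     (2 ^ m * bootstrap_consts c0 K1 K2 m * (2 ^ m * bootstrap_consts c0 K1 K2 m * K1 m + K2 m))"

lemma mono_nonneg_bootstrap_consts: "0 \<le> c0 \<Longrightarrow> mono_nonneg (bootstrap_consts c0 K1 K2)"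
proof -
  assume c0: "0 \<le> c0"
  have "mono (bootstrap_consts c0 K1 K2)" by (rule mono_iff_le_Suc[THEN iffD2]) simp
  moreover have "0 \<le> bootstrap_consts c0 K1 K2 i" for i using c0 by (induction i) (auto simp: le_max_iff_disj)
  ultimately show ?thesis unfolding mono_nonneg_def by auto
qed

lemma deriv_bounds_bootstrap:
  fixes F :: "real^'n::finite \<Rightarrow> real"
  assumes S: "open S" and W: "1 \<le> W" and c0: "0 \<le> c0" and K: "mono_nonneg K1" "mono_nonneg K2"
    and F: "F differentiable_on S" "uniformly_continuous_on S F" "\<And>y. y \<in> S \<Longrightarrow> \<bar>F y\<bar> \<le> c0"
    and B1: "\<And>p. deriv_bounds S W W K1 (B1 p)" and B2: "\<And>p. deriv_bounds S W W K2 (B2 p)"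
    and eq: "\<And>p y. y \<in> S \<Longrightarrow> partial p F y = F y * (F y * B1 p y + B2 p y)"
  shows "deriv_bounds S W 1 (bootstrap_consts c0 K1 K2) F"
proof (rule deriv_boundsI)
  fix m
  let ?KF = "bootstrap_consts c0 K1 K2"
  have KF: "mono_nonneg ?KF" by (rule mono_nonneg_bootstrap_consts[OF c0])
  show "deriv_bounds_upto S W m 1 ?KF F"
  proof (induction m)
    case 0
    show ?case using F by (intro deriv_bounds_uptoI) auto
  next
    case (Suc m)
    let ?Kx = "\<lambda>i. 2 ^ i * ?KF i * (2 ^ i * ?KF i * K1 i + K2 i)"
    have "deriv_bounds_upto S W m W ?Kx (\<lambda>y. F y * (F y * B1 p y + B2 p y))" for p
    proof -
      have "deriv_bounds_upto S W m (1 * W) (\<lambda>i. 2 ^ i * ?KF i * K1 i) (\<lambda>y. F y * B1 p y)"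
        by (rule deriv_bounds_upto_mult[OF S W _ _ KF K(1) Suc]) (use W B1 in \<open>auto simp: deriv_bounds_def\<close>)
      then have "deriv_bounds_upto S W m W (\<lambda>l. 2 ^ l * ?KF l * K1 l + K2 l) (\<lambda>y. F y * B1 p y + B2 p y)"
        using deriv_bounds_upto_sum[OF S _ _, where I="{True, False}" and s=W
            and K="\<lambda>i. if i then (\<lambda>l. 2 ^ l * ?KF l * K1 l) else K2"
            and f="\<lambda>i. if i then (\<lambda>y. F y * B1 p y) else B2 p"] W B2
        by (simp add: deriv_bounds_def)
      from deriv_bounds_upto_mult[OF S W _ _ KF mono_nonneg_add[OF mono_nonneg_Leibniz[OF KF K(1)] K(2)] Suc this]
      show ?thesis using W by simp
    qed
    then show ?case
    proof (rule deriv_bounds_upto_Suc[OF S Suc])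
      show "\<And>p y. y \<in> S \<Longrightarrow> partial p F y = F y * (F y * B1 p y + B2 p y)" by (rule eq)
      have "?Kx m \<le> ?KF (Suc m)" by (simp only: bootstrap_consts.simps(2) max.cobounded2)
      then have "?Kx m * (W * W ^ m) \<le> ?KF (Suc m) * (W * W ^ m)"
        using W by (intro mult_right_mono) auto
      then show "W * ?Kx m * W ^ m \<le> 1 * ?KF (Suc m) * W ^ Suc m"
        by (simp only: power_Suc mult_1 ac_simps)
    qed
  qed
qed

definition inverse_consts :: "real \<Rightarrow> (nat \<Rightarrow> real) \<Rightarrow> nat \<Rightarrow> real" where
  "inverse_consts c K = bootstrap_consts (inverse c) (\<lambda>i. K (Suc i)) (\<lambda>_. 1)"

lemma mono_nonneg_inverse_consts: "0 < c \<Longrightarrow> mono_nonneg (inverse_consts c K)"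
  unfolding inverse_consts_def by (rule mono_nonneg_bootstrap_consts) simp

lemma uniformly_continuous_on_comp_lipschitz:
  fixes g :: "'a::metric_space \<Rightarrow> real"
  assumes "uniformly_continuous_on S g" "0 \<le> C"
    and "\<And>a b. a \<in> g ` S \<Longrightarrow> b \<in> g ` S \<Longrightarrow> \<bar>\<phi> a - \<phi> b\<bar> \<le> C * \<bar>a - b\<bar>"
  shows "uniformly_continuous_on S (\<lambda>y. \<phi> (g y))"
  by (rule uniformly_continuous_on_compose[OF assms(1)], rule lipschitz_on_uniformly_continuous[of C])
     (use assms(2,3) in \<open>auto intro!: lipschitz_onI simp: dist_real_def\<close>)

lemma abs_inverse_diff_le:
  fixes a b c :: real
  assumes "c \<le> a" "c \<le> b" "0 < c"
  shows "\<bar>inverse a - inverse b\<bar> \<le> inverse c ^ 2 * \<bar>a - b\<bar>"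
proof -
  have "\<bar>inverse a - inverse b\<bar> = \<bar>a - b\<bar> / (a * b)"
    using assms by (simp add: field_simps abs_minus_commute)
  also have "\<dots> \<le> \<bar>a - b\<bar> / (c * c)" using assms by (intro divide_left_mono mult_mono) auto
  also have "\<dots> = inverse c ^ 2 * \<bar>a - b\<bar>" by (simp add: field_simps power2_eq_square)
  finally show ?thesis .
qed

lemma sqrt_diff_eq: "0 < u \<Longrightarrow> 0 < v \<Longrightarrow> sqrt u - sqrt v = (u - v) * inverse (sqrt u + sqrt v)"
proof -
  assume uv: "0 < u" "0 < v"
  then have "u - v = (sqrt u - sqrt v) * (sqrt u + sqrt v)" by (simp add: algebra_simps)
  moreover have "sqrt u + sqrt v > 0" using uv by (simp add: add_pos_pos)
  ultimately show ?thesis by (simp add: field_simps)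
qed

lemma abs_sqrt_diff_le:
  fixes a b c :: real
  assumes "c \<le> a" "c \<le> b" "0 < c"
  shows "\<bar>sqrt a - sqrt b\<bar> \<le> inverse (sqrt c) * \<bar>a - b\<bar>"
proof -
  have "sqrt c \<le> sqrt a + sqrt b" using assms by (smt (verit) real_sqrt_ge_zero real_sqrt_le_mono)
  moreover have "(sqrt a - sqrt b) * (sqrt a + sqrt b) = a - b"
    using assms by (simp add: algebra_simps)
  then have "\<bar>a - b\<bar> = \<bar>sqrt a - sqrt b\<bar> * (sqrt a + sqrt b)"
    using assms by (metis abs_mult abs_of_nonneg add_nonneg_nonneg less_le_trans less_imp_le real_sqrt_ge_zero)
  ultimately have "\<bar>sqrt a - sqrt b\<bar> * sqrt c \<le> \<bar>a - b\<bar>" by (simp add: mult_left_mono)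
  then show ?thesis using assms by (simp add: field_simps)
qed

text \<open>\<partial>(1/g) = (1/g) ((1/g) (- \<partial>g) + 0).\<close>

lemma deriv_bounds_inverse:
  fixes g :: "real^'n::finite \<Rightarrow> real"
  assumes S: "open S" and W: "1 \<le> W" and K: "mono_nonneg K" and c: "0 < c"
    and g: "deriv_bounds S W 1 K g" and gc: "\<And>y. y \<in> S \<Longrightarrow> c \<le> g y"
  shows "deriv_bounds S W 1 (inverse_consts c K) (\<lambda>y. inverse (g y))"
  unfolding inverse_consts_def
proof (rule deriv_bounds_bootstrap[OF S W _ mono_nonneg_shift[OF K] mono_nonneg_const])
  have gd: "\<And>y. y \<in> S \<Longrightarrow> g differentiable (at y)"
    using deriv_bounds_differentiable_on[OF g] S by (simp add: differentiable_on_eq_differentiable_at)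
  have gpos: "\<And>y. y \<in> S \<Longrightarrow> g y \<noteq> 0" using gc c by force
  show "(\<lambda>y. inverse (g y)) differentiable_on S"
    using gd gpos S by (auto intro!: differentiable_inverse simp: differentiable_on_eq_differentiable_at)
  show "uniformly_continuous_on S (\<lambda>y. inverse (g y))"
    using gc c by (intro uniformly_continuous_on_comp_lipschitz[OF deriv_bounds_uniformly_continuous_on[OF g]
        _ abs_inverse_diff_le]) auto
  show "\<bar>inverse (g y)\<bar> \<le> inverse c" if "y \<in> S" for y
    using gc[OF that] c by (simp add: le_imp_inverse_le)
  show "deriv_bounds S W W (\<lambda>i. K (Suc i)) (\<lambda>y. - partial p g y)" for p
    using deriv_bounds_cmult[OF S deriv_bounds_partial[OF g], where c="-1"] by simp
  show "deriv_bounds S W W (\<lambda>_. 1) (\<lambda>y. 0)" for p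
    by (rule deriv_bounds_mono[OF deriv_bounds_zero]) (use W in auto)
  show "partial p (\<lambda>y. inverse (g y)) y = inverse (g y) * (inverse (g y) * - partial p g y + 0)"
    if "y \<in> S" for p y
    using partial_comp[OF gd[OF that] DERIV_inverse[OF gpos[OF that]], of p]
    by (simp add: power2_eq_square)
qed (use c in auto)

definition sqrt_consts :: "real \<Rightarrow> (nat \<Rightarrow> real) \<Rightarrow> nat \<Rightarrow> real" where
  "sqrt_consts c K = bootstrap_consts (sqrt (K 0)) (\<lambda>_. 1) (\<lambda>i. 2 ^ i * K (Suc i) * inverse_consts c K i)"

lemma mono_nonneg_sqrt_consts: "mono_nonneg K \<Longrightarrow> mono_nonneg (sqrt_consts c K)"
  unfolding sqrt_consts_def by (rule mono_nonneg_bootstrap_consts) (simp add: mono_nonneg_nonneg)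

text \<open>\<partial>(sqrt g) = sqrt g (sqrt g * 0 + \<partial>g / (2 g)).\<close>

lemma deriv_bounds_sqrt:
  fixes g :: "real^'n::finite \<Rightarrow> real"
  assumes S: "open S" and W: "1 \<le> W" and K: "mono_nonneg K" and c: "0 < c"
    and g: "deriv_bounds S W 1 K g" and gc: "\<And>y. y \<in> S \<Longrightarrow> c \<le> g y"
  shows "deriv_bounds S W 1 (sqrt_consts c K) (\<lambda>y. sqrt (g y))"
  unfolding sqrt_consts_def
proof (rule deriv_bounds_bootstrap[OF S W _ mono_nonneg_const
      mono_nonneg_Leibniz[OF mono_nonneg_shift[OF K] mono_nonneg_inverse_consts[OF c]]])
  have gd: "\<And>y. y \<in> S \<Longrightarrow> g differentiable (at y)"
    using deriv_bounds_differentiable_on[OF g] S by (simp add: differentiable_on_eq_differentiable_at)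
  have gpos: "\<And>y. y \<in> S \<Longrightarrow> 0 < g y" using gc c by force
  show "(\<lambda>y. sqrt (g y)) differentiable_on S"
    unfolding differentiable_on_eq_differentiable_at[OF S]
  proof
    fix y assume y: "y \<in> S"
    have "sqrt differentiable (at (g y))"
      using DERIV_real_sqrt[OF gpos[OF y]] unfolding differentiable_def
      by (auto dest: has_field_derivative_imp_has_derivative)
    then show "(\<lambda>y. sqrt (g y)) differentiable (at y)"
      using differentiable_compose[OF _ gd[OF y]] by blast
  qed
  show "uniformly_continuous_on S (\<lambda>y. sqrt (g y))"
    using gc c by (intro uniformly_continuous_on_comp_lipschitz[OF deriv_bounds_uniformly_continuous_on[OF g]
        _ abs_sqrt_diff_le]) auto
  show "\<bar>sqrt (g y)\<bar> \<le> sqrt (K 0)" if "y \<in> S" for y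
    using deriv_bounds_abs_le[OF g that] gpos[OF that] by simp
  show "0 \<le> sqrt (K 0)" using K by (simp add: mono_nonneg_nonneg)
  show "deriv_bounds S W W (\<lambda>_. 1) (\<lambda>y. 0)" for p
    by (rule deriv_bounds_mono[OF deriv_bounds_zero]) (use W in auto)
  show "deriv_bounds S W W (\<lambda>i. 2 ^ i * K (Suc i) * inverse_consts c K i)
      (\<lambda>y. 1/2 * (partial p g y * inverse (g y)))" for p
  proof -
    have "deriv_bounds S W ((1 * W) * 1) (\<lambda>i. 2 ^ i * K (Suc i) * inverse_consts c K i)
        (\<lambda>y. partial p g y * inverse (g y))"
      by (rule deriv_bounds_mult[OF S W _ _ mono_nonneg_shift[OF K] mono_nonneg_inverse_consts[OF c]
            deriv_bounds_partial[OF g] deriv_bounds_inverse[OF S W K c g gc]]) (use W in auto)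
    from deriv_bounds_cmult[OF S this, of "1/2"] show ?thesis
      by (rule deriv_bounds_mono) (use W mono_nonneg_nonneg[OF mono_nonneg_Leibniz[OF
            mono_nonneg_shift[OF K] mono_nonneg_inverse_consts[OF c]]] in auto)
  qed
  show "partial p (\<lambda>y. sqrt (g y)) y = sqrt (g y) * (sqrt (g y) * 0 + 1/2 * (partial p g y * inverse (g y)))"
    if "y \<in> S" for p y
  proof -
    have D: "partial p (\<lambda>y. sqrt (g y)) y = inverse (sqrt (g y)) / 2 * partial p g y"
      by (rule partial_comp[OF gd[OF that] DERIV_real_sqrt[OF gpos[OF that]]])
    have e: "inverse (g y) = inverse (sqrt (g y)) * inverse (sqrt (g y))"
      using gpos[OF that] by (simp add: inverse_mult_distrib[symmetric])
    have "sqrt (g y) > 0" using gpos[OF that] by simp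
    then show ?thesis unfolding D e by (simp add: field_simps)
  qed
qed (use c in auto)

section \<open>Symmetry of iterated partial derivatives\<close>

lemma norm_axis_combination_le: "norm (s *\<^sub>R axis p 1 + t *\<^sub>R axis q (1::real) :: real^'n::finite) \<le> \<bar>s\<bar> + \<bar>t\<bar>"
  using norm_triangle_ineq[of "s *\<^sub>R axis p 1" "t *\<^sub>R axis q (1::real) :: real^'n"] by simp

lemma second_difference_mvt:
  fixes f :: "real^'n::finite \<Rightarrow> real" and p q :: 'n
  assumes S: "open S" and r: "ball x r \<subseteq> S" and fd: "f differentiable_on S"
    and t: "0 < t" "2 * t < r"
  defines "u \<equiv> axis p 1 :: real^'n" and "v \<equiv> axis q 1 :: real^'n"
  shows "\<exists>z. 0 < z \<and> z < t \<and>
    f (x + t *\<^sub>R v + t *\<^sub>R u) - f (x + t *\<^sub>R u) - f (x + t *\<^sub>R v) + f x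
      = t * (partial p f (x + z *\<^sub>R u + t *\<^sub>R v) - partial p f (x + z *\<^sub>R u))"
proof -
  have diff: "f differentiable (at (x + s *\<^sub>R u + s' *\<^sub>R v))" if "\<bar>s\<bar> \<le> t" "\<bar>s'\<bar> \<le> t" for s s'
  proof -
    have "x + (s *\<^sub>R u + s' *\<^sub>R v) \<in> ball x r"
      using norm_axis_combination_le[of s p s' q] that t unfolding u_def v_def
      by (simp add: dist_norm norm_minus_commute add.commute)
    then show ?thesis using r fd S by (auto simp: add.assoc differentiable_on_eq_differentiable_at)
  qed
  define \<phi> where "\<phi> s = f ((x + t *\<^sub>R v) + s *\<^sub>R u) - f (x + s *\<^sub>R u)" for s
  have D\<phi>: "(\<phi> has_real_derivative (partial p f (x + s *\<^sub>R u + t *\<^sub>R v) - partial p f (x + s *\<^sub>R u))) (at s)"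
    if "\<bar>s\<bar> \<le> t" for s
  proof -
    have "((\<lambda>s. f ((x + t *\<^sub>R v) + s *\<^sub>R u)) has_real_derivative partial p f ((x + t *\<^sub>R v) + s *\<^sub>R u)) (at s)"
      unfolding u_def by (rule has_real_derivative_partial_along_axis)
        (use diff[of s t] that t in \<open>simp add: u_def add_ac\<close>)
    moreover have "((\<lambda>s. f (x + s *\<^sub>R u)) has_real_derivative partial p f (x + s *\<^sub>R u)) (at s)"
      unfolding u_def by (rule has_real_derivative_partial_along_axis) (use diff[of s 0] that t in \<open>simp add: u_def\<close>)
    ultimately show ?thesis unfolding \<phi>_def by (simp add: DERIV_diff add_ac)
  qed
  obtain l z where z: "0 < z" "z < t" "DERIV \<phi> z :> l" "\<phi> t - \<phi> 0 = (t - 0) * l"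
  proof -
    have "continuous_on {0..t} \<phi>"
      by (rule DERIV_continuous_on[where D="\<lambda>s. partial p f (x + s *\<^sub>R u + t *\<^sub>R v) - partial p f (x + s *\<^sub>R u)"])
         (use D\<phi> t in \<open>auto intro: has_field_derivative_at_within\<close>)
    moreover have "\<phi> differentiable (at s)" if "0 < s" "s < t" for s
      using D\<phi>[of s] that unfolding real_differentiable_def by auto
    ultimately show ?thesis using MVT[of 0 t \<phi>] t that by blast
  qed
  have "l = partial p f (x + z *\<^sub>R u + t *\<^sub>R v) - partial p f (x + z *\<^sub>R u)"
    using DERIV_unique[OF z(3) D\<phi>[of z]] z by auto
  moreover have "f (x + t *\<^sub>R v + t *\<^sub>R u) - f (x + t *\<^sub>R u) - f (x + t *\<^sub>R v) + f x = t * l"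
    using z(4) unfolding \<phi>_def by (simp add: algebra_simps)
  ultimately show ?thesis using z by blast
qed

lemma second_difference_approx:
  fixes f :: "real^'n::finite \<Rightarrow> real"
  assumes S: "open S" and r: "0 < r" "ball x r \<subseteq> S" and fd: "f differentiable_on S"
    and Dp: "(partial p f has_derivative Dp) (at x)" and e: "0 < e"
  shows "\<exists>d>0. \<forall>t. 0 < t \<and> t < d \<longrightarrow>
     \<bar>(f (x + t *\<^sub>R axis q 1 + t *\<^sub>R axis p 1) - f (x + t *\<^sub>R axis p 1) - f (x + t *\<^sub>R axis q 1) + f x)
        - t\<^sup>2 * Dp (axis q 1)\<bar> \<le> 3 * e * t\<^sup>2"
proof -
  let ?u = "axis p (1::real) :: real^'n" and ?v = "axis q (1::real) :: real^'n"
  let ?g = "partial p f"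
  have lin: "linear Dp" using Dp has_derivative_linear by blast
  obtain d0 where d0: "d0 > 0" "\<forall>y. norm (y - x) < d0 \<longrightarrow> \<bar>?g y - ?g x - Dp (y - x)\<bar> \<le> e * norm (y - x)"
    using Dp[unfolded has_derivative_within_alt] e by (auto simp: real_norm_def)
  define d where "d = min (d0 / 2) (r / 2)"
  show ?thesis
  proof (intro exI[of _ d] conjI allI impI)
    show "d > 0" using d0 r unfolding d_def by simp
    fix t :: real assume t: "0 < t \<and> t < d"
    then obtain z where z: "0 < z" "z < t" and
      Delta: "f (x + t *\<^sub>R ?v + t *\<^sub>R ?u) - f (x + t *\<^sub>R ?u) - f (x + t *\<^sub>R ?v) + f x
        = t * (?g (x + z *\<^sub>R ?u + t *\<^sub>R ?v) - ?g (x + z *\<^sub>R ?u))"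
      using second_difference_mvt[OF S r(2) fd, where t=t and p=p and q=q] unfolding d_def by auto
    have e1: "\<bar>?g (x + z *\<^sub>R ?u + t *\<^sub>R ?v) - ?g x - Dp (z *\<^sub>R ?u + t *\<^sub>R ?v)\<bar>
        \<le> e * norm (z *\<^sub>R ?u + t *\<^sub>R ?v)"
      using d0(2)[rule_format, of "x + z *\<^sub>R ?u + t *\<^sub>R ?v"] norm_axis_combination_le[of z p t q] z t unfolding d_def
      by (auto simp: algebra_simps)
    have e2: "\<bar>?g (x + z *\<^sub>R ?u) - ?g x - Dp (z *\<^sub>R ?u)\<bar> \<le> e * norm (z *\<^sub>R ?u)"
      using d0(2)[rule_format, of "x + z *\<^sub>R ?u"] z t unfolding d_def by auto
    have n1: "e * norm (z *\<^sub>R ?u + t *\<^sub>R ?v) \<le> e * (2 * t)"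
      using norm_axis_combination_le[of z p t q] z t e by (intro mult_left_mono) auto
    have n2: "e * norm (z *\<^sub>R ?u) \<le> e * t" using z e by (intro mult_left_mono) auto
    have "Dp (z *\<^sub>R ?u + t *\<^sub>R ?v) = z * Dp ?u + t * Dp ?v" "Dp (z *\<^sub>R ?u) = z * Dp ?u"
      using lin by (simp_all add: linear_add linear_cmul)
    then have l: "\<bar>(?g (x + z *\<^sub>R ?u + t *\<^sub>R ?v) - ?g (x + z *\<^sub>R ?u)) - t * Dp ?v\<bar> \<le> 3 * e * t"
      using e1 e2 n1 n2 by (simp add: abs_le_iff)
    have "t * (?g (x + z *\<^sub>R ?u + t *\<^sub>R ?v) - ?g (x + z *\<^sub>R ?u)) - t\<^sup>2 * Dp ?v
        = t * ((?g (x + z *\<^sub>R ?u + t *\<^sub>R ?v) - ?g (x + z *\<^sub>R ?u)) - t * Dp ?v)"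
      by (simp add: power2_eq_square algebra_simps)
    also have "\<bar>\<dots>\<bar> \<le> t * (3 * e * t)"
      unfolding abs_mult using t l by (simp add: mult_left_mono)
    finally show "\<bar>(f (x + t *\<^sub>R ?v + t *\<^sub>R ?u) - f (x + t *\<^sub>R ?u) - f (x + t *\<^sub>R ?v) + f x) - t\<^sup>2 * Dp ?v\<bar>
        \<le> 3 * e * t\<^sup>2"
      unfolding Delta by (simp add: power2_eq_square mult_ac)
  qed
qed

lemma abs_mixed_derivatives_diff_le:
  fixes f :: "real^'n::finite \<Rightarrow> real"
  assumes S: "open S" and r: "0 < r" "ball x r \<subseteq> S" and fd: "f differentiable_on S"
    and Dp: "(partial p f has_derivative Dp) (at x)" and Dq: "(partial q f has_derivative Dq) (at x)"
    and e: "0 < e"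
  shows "\<bar>Dp (axis q 1) - Dq (axis p 1)\<bar> \<le> 6 * e"
proof -
  obtain d1 where d1: "d1 > 0" "\<forall>t. 0 < t \<and> t < d1 \<longrightarrow>
   \<bar>(f (x + t *\<^sub>R axis q 1 + t *\<^sub>R axis p 1) - f (x + t *\<^sub>R axis p 1) - f (x + t *\<^sub>R axis q 1) + f x)
      - t\<^sup>2 * Dp (axis q 1)\<bar> \<le> 3 * e * t\<^sup>2"
    using second_difference_approx[OF S r fd Dp e, of q] by blast
  obtain d2 where d2: "d2 > 0" "\<forall>t. 0 < t \<and> t < d2 \<longrightarrow>
   \<bar>(f (x + t *\<^sub>R axis p 1 + t *\<^sub>R axis q 1) - f (x + t *\<^sub>R axis q 1) - f (x + t *\<^sub>R axis p 1) + f x)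
      - t\<^sup>2 * Dq (axis p 1)\<bar> \<le> 3 * e * t\<^sup>2"
    using second_difference_approx[OF S r fd Dq e, of p] by blast
  define t where "t = min d1 d2 / 2"
  have t: "0 < t" "t < d1" "t < d2" using d1 d2 unfolding t_def by auto
  have c: "x + t *\<^sub>R axis p 1 + t *\<^sub>R axis q 1 = x + t *\<^sub>R axis q 1 + t *\<^sub>R axis p 1"
    by (simp add: algebra_simps)
  define \<Delta> where "\<Delta> = f (x + t *\<^sub>R axis q 1 + t *\<^sub>R axis p 1) - f (x + t *\<^sub>R axis p 1)
    - f (x + t *\<^sub>R axis q 1) + f x"
  have "\<bar>\<Delta> - t\<^sup>2 * Dp (axis q 1)\<bar> \<le> 3 * e * t\<^sup>2" using d1(2) t unfolding \<Delta>_def by blast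
  moreover have "\<bar>\<Delta> - t\<^sup>2 * Dq (axis p 1)\<bar> \<le> 3 * e * t\<^sup>2"
    using d2(2) t unfolding \<Delta>_def c by (simp add: algebra_simps)
  ultimately have "\<bar>t\<^sup>2 * (Dp (axis q 1) - Dq (axis p 1))\<bar> \<le> 6 * e * t\<^sup>2"
    by (simp add: abs_le_iff algebra_simps)
  moreover have "\<bar>t\<^sup>2 * (Dp (axis q 1) - Dq (axis p 1))\<bar> = t\<^sup>2 * \<bar>Dp (axis q 1) - Dq (axis p 1)\<bar>"
    by (simp add: abs_mult)
  ultimately have "t\<^sup>2 * \<bar>Dp (axis q 1) - Dq (axis p 1)\<bar> \<le> t\<^sup>2 * (6 * e)" by (simp add: algebra_simps)
  then show ?thesis using t by simp
qed

lemma partial_commute: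
  fixes f :: "real^'n::finite \<Rightarrow> real"
  assumes S: "open S" and x: "x \<in> S" and fd: "f differentiable_on S"
    and gp: "partial p f differentiable_on S" and gq: "partial q f differentiable_on S"
  shows "partial q (partial p f) x = partial p (partial q f) x"
proof -
  obtain r where r: "0 < r" "ball x r \<subseteq> S" using S x open_contains_ball by blast
  obtain Dp where Dp: "(partial p f has_derivative Dp) (at x)"
    using gp S x by (auto simp: differentiable_on_eq_differentiable_at differentiable_def)
  obtain Dq where Dq: "(partial q f has_derivative Dq) (at x)"
    using gq S x by (auto simp: differentiable_on_eq_differentiable_at differentiable_def)
  have "\<bar>Dp (axis q 1) - Dq (axis p 1)\<bar> \<le> 0 + e" if "0 < e" for e
    using abs_mixed_derivatives_diff_le[OF S r fd Dp Dq, of "e / 6"] that by simp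
  then have "Dp (axis q 1) = Dq (axis p 1)" using field_le_epsilon[of "\<bar>Dp (axis q 1) - Dq (axis p 1)\<bar>" 0] by simp
  then show ?thesis using partial_eq_derivative[OF Dp, of q] partial_eq_derivative[OF Dq, of p] by simp
qed

lemma Dl_swap:
  fixes f :: "real^'n::finite \<Rightarrow> real"
  assumes S: "open S" and x: "x \<in> S" and f: "\<And>ds. Dl ds f differentiable_on S"
  shows "Dl (as @ p # q # bs) f x = Dl (as @ q # p # bs) f x"
proof -
  have "Dl [p, q] (Dl bs f) y = Dl [q, p] (Dl bs f) y" if "y \<in> S" for y
    using partial_commute[OF S that, of "Dl bs f" q p] f[of bs] f[of "p # bs"] f[of "q # bs"] by simp
  then have "Dl as (Dl [p, q] (Dl bs f)) x = Dl as (Dl [q, p] (Dl bs f)) x"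
    by (rule Dl_eq_on_open[OF S x])
  then show ?thesis
    using Dl_append[of as "[p, q] @ bs" f] Dl_append[of "[p, q]" bs f]
      Dl_append[of as "[q, p] @ bs" f] Dl_append[of "[q, p]" bs f] by simp
qed

lemma Dl_move_front:
  fixes f :: "real^'n::finite \<Rightarrow> real"
  assumes S: "open S" and f: "\<And>ds. Dl ds f differentiable_on S"
  shows "x \<in> S \<Longrightarrow> Dl (as @ p # bs) f x = Dl (p # as @ bs) f x"
proof (induction as arbitrary: x)
  case Nil
  then show ?case by simp
next
  case (Cons q as)
  have "Dl ((q # as) @ p # bs) f x = partial q (Dl (as @ p # bs) f) x" by simp
  also have "\<dots> = partial q (Dl (p # as @ bs) f) x" by (rule partial_eq_on_open[OF S Cons.prems Cons.IH])
  also have "\<dots> = Dl ([] @ q # p # (as @ bs)) f x" by simp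
  also have "\<dots> = Dl ([] @ p # q # (as @ bs)) f x" by (rule Dl_swap[OF S Cons.prems f])
  finally show ?case by simp
qed

lemma Dl_mset_eq:
  fixes f :: "real^'n::finite \<Rightarrow> real"
  assumes S: "open S" and f: "\<And>ds. Dl ds f differentiable_on S"
  shows "mset ds1 = mset ds2 \<Longrightarrow> x \<in> S \<Longrightarrow> Dl ds1 f x = Dl ds2 f x"
proof (induction ds1 arbitrary: ds2 x)
  case Nil
  then show ?case by simp
next
  case (Cons p ds)
  have "p \<in> set ds2" using Cons.prems(1) by (metis list.set_intros(1) set_mset_mset)
  then obtain as bs where ds2: "ds2 = as @ p # bs" by (meson split_list)
  have "mset ds = mset (as @ bs)" using Cons.prems(1) ds2 by simp
  then have "Dl (p # ds) f x = partial p (Dl (as @ bs) f) x"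
    using partial_eq_on_open[OF S Cons.prems(2)] Cons.IH by (metis Dl.simps(2))
  also have "\<dots> = Dl ds2 f x" using Dl_move_front[OF S f Cons.prems(2), of as p bs] ds2 by simp
  finally show ?case .
qed

section \<open>Multi-indices and the norms of the statement\<close>

lemma coords: "distinct (coords :: 'n::finite list)" "set (coords :: 'n list) = UNIV"
proof -
  have "\<exists>xs. distinct xs \<and> set xs = (UNIV :: 'n set)" using finite_distinct_list[of "UNIV :: 'n set"] by auto
  then have "distinct (coords :: 'n list) \<and> set (coords :: 'n list) = UNIV" unfolding coords_def by (rule someI_ex)
  then show "distinct (coords :: 'n list)" "set (coords :: 'n list) = UNIV" by blast+
qed

lemma count_mset_concat: "count (mset (concat xss)) q = (\<Sum>xs\<leftarrow>xss. count (mset xs) q)"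
  by (induction xss) auto

definition multiindex_dirs :: "('n::finite \<Rightarrow> nat) \<Rightarrow> 'n list" where
  "multiindex_dirs \<beta> = concat (map (\<lambda>p. replicate (\<beta> p) p) coords)"

lemma Dm_eq_Dl: "Dm \<beta> f = Dl (multiindex_dirs \<beta>) f"
  unfolding Dm_def multiindex_dirs_def ..

lemma length_multiindex_dirs: "length (multiindex_dirs (\<beta> :: 'n::finite \<Rightarrow> nat)) = sum \<beta> UNIV"
proof -
  have "length (multiindex_dirs \<beta>) = sum_list (map \<beta> (coords :: 'n list))"
    unfolding multiindex_dirs_def by (simp add: length_concat o_def)
  also have "\<dots> = sum \<beta> (set coords)" by (rule sum_list_distinct_conv_sum_set[OF coords(1)])
  finally show ?thesis by (simp add: coords(2))
qed

lemma count_multiindex_dirs: "count (mset (multiindex_dirs (\<beta> :: 'n::finite \<Rightarrow> nat))) q = \<beta> q"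
proof -
  have "count (mset (multiindex_dirs \<beta>)) q
      = sum_list (map (\<lambda>p. count (mset (replicate (\<beta> p) p)) q) (coords :: 'n list))"
    unfolding multiindex_dirs_def count_mset_concat by (simp add: o_def)
  also have "\<dots> = sum (\<lambda>p. count (mset (replicate (\<beta> p) p)) q) (set coords)"
    by (rule sum_list_distinct_conv_sum_set[OF coords(1)])
  also have "\<dots> = (\<Sum>p\<in>UNIV. if p = q then \<beta> p else 0)" unfolding coords(2)
    by (intro sum.cong) auto
  finally show ?thesis by simp
qed

lemma count_mset_in_MI: "(\<lambda>p. count (mset (ds :: 'n::finite list)) p) \<in> MI (length ds)"
  using sum_count_set[of ds UNIV] unfolding MI_def by (simp add: count_mset)

lemma finite_MI: "finite (MI k :: ('n::finite \<Rightarrow> nat) set)"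
proof -
  have "(MI k :: ('n \<Rightarrow> nat) set) \<subseteq> PiE UNIV (\<lambda>_. {..k})"
  proof
    fix \<beta> :: "'n \<Rightarrow> nat" assume "\<beta> \<in> MI k"
    then have "\<beta> p \<le> k" for p unfolding MI_def using member_le_sum[of p UNIV \<beta>] by auto
    then show "\<beta> \<in> PiE UNIV (\<lambda>_. {..k})" by (auto simp: PiE_def extensional_def)
  qed
  moreover have "finite (PiE (UNIV :: 'n set) (\<lambda>_. {..k}))" by (intro finite_PiE) auto
  ultimately show ?thesis by (rule finite_subset)
qed

lemma MI_0: "(MI 0 :: ('n::finite \<Rightarrow> nat) set) = {\<lambda>_. 0}"
  unfolding MI_def by (auto simp: fun_eq_iff)

lemma Dm_0: "Dm (\<lambda>_::'n::finite. 0) f = f"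
proof -
  have "multiindex_dirs (\<lambda>_::'n. 0) = []" unfolding multiindex_dirs_def by (simp add: concat_eq_Nil_conv)
  then show ?thesis by (simp add: Dm_eq_Dl)
qed

text \<open>Smoothness makes Dl independent of the order of the directions (Schwarz), so every
  iterated derivative is some Dm.\<close>

lemma Dl_eq_Dm:
  fixes f :: "real^'n::finite \<Rightarrow> real"
  assumes "open S" "\<And>ds. Dl ds f differentiable_on S" "x \<in> S"
  shows "Dl ds f x = Dm (\<lambda>p. count (mset ds) p) f x"
  unfolding Dm_eq_Dl
  by (rule Dl_mset_eq[OF assms(1,2) _ assms(3)], rule multiset_eqI) (simp add: count_multiindex_dirs)

lemma bdd_above_sqrt_sum_sq:
  fixes F :: "'j \<Rightarrow> real^'n::finite \<Rightarrow> real"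
  assumes "bounded \<Omega>" "finite J" "\<And>j. j \<in> J \<Longrightarrow> uniformly_continuous_on \<Omega> (F j)"
  shows "bdd_above ((\<lambda>x. sqrt (\<Sum>j\<in>J. (F j x)\<^sup>2)) ` \<Omega>)"
proof -
  have "\<forall>j\<in>J. \<exists>B. \<forall>x\<in>\<Omega>. \<bar>F j x\<bar> \<le> B"
    using bounded_uniformly_continuous_image[OF assms(3) assms(1)] unfolding bounded_iff by auto
  then obtain B where B: "\<And>j x. j \<in> J \<Longrightarrow> x \<in> \<Omega> \<Longrightarrow> \<bar>F j x\<bar> \<le> B j" by metis
  have "sqrt (\<Sum>j\<in>J. (F j x)\<^sup>2) \<le> (\<Sum>j\<in>J. B j)" if "x \<in> \<Omega>" for x
    using L2_set_le_sum_abs[of "\<lambda>j. F j x" J] sum_mono[of J "\<lambda>j. \<bar>F j x\<bar>" B] B that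
    by (fastforce simp: L2_set_def)
  then show ?thesis by (intro bdd_aboveI[where M="\<Sum>j\<in>J. B j"]) auto
qed

lemma sqrt_sum_sq_le_SUP:
  fixes F :: "'j \<Rightarrow> real^'n::finite \<Rightarrow> real"
  assumes "bounded \<Omega>" "finite J" "\<And>j. j \<in> J \<Longrightarrow> uniformly_continuous_on \<Omega> (F j)" "x \<in> \<Omega>"
  shows "sqrt (\<Sum>j\<in>J. (F j x)\<^sup>2) \<le> (SUP y\<in>\<Omega>. sqrt (\<Sum>j\<in>J. (F j y)\<^sup>2))"
  by (rule cSUP_upper[OF assms(4) bdd_above_sqrt_sum_sq[OF assms(1-3)]])

lemma SUP_sqrt_sum_sq_nonneg:
  fixes F :: "'j \<Rightarrow> real^'n::finite \<Rightarrow> real"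
  assumes "bounded \<Omega>" "finite J" "\<And>j. j \<in> J \<Longrightarrow> uniformly_continuous_on \<Omega> (F j)" "\<Omega> \<noteq> {}"
  shows "0 \<le> (SUP y\<in>\<Omega>. sqrt (\<Sum>j\<in>J. (F j y)\<^sup>2))"
proof -
  obtain x where x: "x \<in> \<Omega>" using assms(4) by blast
  have "0 \<le> sqrt (\<Sum>j\<in>J. (F j x)\<^sup>2)" by (simp add: sum_nonneg)
  also have "\<dots> \<le> (SUP y\<in>\<Omega>. sqrt (\<Sum>j\<in>J. (F j y)\<^sup>2))" by (rule sqrt_sum_sq_le_SUP[OF assms(1-3) x])
  finally show ?thesis .
qed

lemma semi_nonneg:
  fixes F :: "'j \<Rightarrow> real^'n::finite \<Rightarrow> real"
  assumes "bounded \<Omega>" "\<Omega> \<noteq> {}" "finite J"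
    and "\<And>\<beta> j. \<beta> \<in> MI k \<Longrightarrow> j \<in> J \<Longrightarrow> uniformly_continuous_on \<Omega> (Dm \<beta> (F j))"
  shows "0 \<le> semi \<Omega> J F k"
  unfolding semi_def using assms by (intro sum_nonneg SUP_sqrt_sum_sq_nonneg) auto

lemma sqrt_sum_sq_le_semi:
  fixes F :: "'j \<Rightarrow> real^'n::finite \<Rightarrow> real"
  assumes bd: "bounded \<Omega>" and J: "finite J"
    and UC: "\<And>\<beta> j. \<beta> \<in> MI k \<Longrightarrow> j \<in> J \<Longrightarrow> uniformly_continuous_on \<Omega> (Dm \<beta> (F j))"
    and \<beta>: "\<beta> \<in> MI k" and x: "x \<in> \<Omega>"
  shows "sqrt (\<Sum>j\<in>J. (Dm \<beta> (F j) x)\<^sup>2) \<le> semi \<Omega> J F k"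
proof -
  have "sqrt (\<Sum>j\<in>J. (Dm \<beta> (F j) x)\<^sup>2) \<le> (SUP y\<in>\<Omega>. sqrt (\<Sum>j\<in>J. (Dm \<beta> (F j) y)\<^sup>2))"
    by (rule sqrt_sum_sq_le_SUP[OF bd J UC[OF \<beta>] x])
  also have "\<dots> \<le> semi \<Omega> J F k"
    unfolding semi_def
  proof (rule member_le_sum[OF \<beta> _ finite_MI])
    fix \<gamma> assume "\<gamma> \<in> MI k - {\<beta>}"
    then have "\<And>j. j \<in> J \<Longrightarrow> uniformly_continuous_on \<Omega> (Dm \<gamma> (F j))" using UC by blast
    moreover have "\<Omega> \<noteq> {}" using x by blast
    ultimately show "0 \<le> (SUP y\<in>\<Omega>. sqrt (\<Sum>j\<in>J. (Dm \<gamma> (F j) y)\<^sup>2))"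
      by (rule SUP_sqrt_sum_sq_nonneg[OF bd J])
  qed
  finally show ?thesis .
qed

lemma sqrt_sum_sq_le_cnorm:
  fixes F :: "'j \<Rightarrow> real^'n::finite \<Rightarrow> real"
  assumes bd: "bounded \<Omega>" and J: "finite J"
    and UC: "\<And>\<beta> j i. i \<le> k' \<Longrightarrow> \<beta> \<in> MI i \<Longrightarrow> j \<in> J \<Longrightarrow> uniformly_continuous_on \<Omega> (Dm \<beta> (F j))"
    and k: "k \<le> k'" and \<beta>: "\<beta> \<in> MI k" and x: "x \<in> \<Omega>"
  shows "sqrt (\<Sum>j\<in>J. (Dm \<beta> (F j) x)\<^sup>2) \<le> cnorm \<Omega> J F k'"
proof -
  have "sqrt (\<Sum>j\<in>J. (Dm \<beta> (F j) x)\<^sup>2) \<le> semi \<Omega> J F k"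
    by (rule sqrt_sum_sq_le_semi[OF bd J _ \<beta> x]) (use UC k in auto)
  also have "\<dots> \<le> (\<Sum>i\<le>k'. semi \<Omega> J F i)"
  proof (rule member_le_sum)
    show "0 \<le> semi \<Omega> J F i" if "i \<in> {..k'} - {k}" for i
      by (rule semi_nonneg[OF bd _ J]) (use x UC that in auto)
  qed (use k in auto)
  finally show ?thesis unfolding cnorm_def .
qed

lemma semi_le_deriv_bounds:
  fixes F :: "'j \<Rightarrow> real^'n::finite \<Rightarrow> real"
  assumes ne: "\<Omega> \<noteq> {}" and s: "0 \<le> s" and W: "1 \<le> W" and K: "mono_nonneg K"
    and F: "\<And>j. j \<in> J \<Longrightarrow> deriv_bounds \<Omega> W s K (F j)"
  shows "semi \<Omega> J F i \<le> real (card (MI i :: ('n \<Rightarrow> nat) set)) * (sqrt (real (card J)) * (s * K i * W ^ i))"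
proof -
  let ?B = "s * K i * W ^ i"
  have B0: "0 \<le> ?B" using s K W by (simp add: mono_nonneg_nonneg)
  have "(SUP x\<in>\<Omega>. sqrt (\<Sum>j\<in>J. (Dm \<beta> (F j) x)\<^sup>2)) \<le> sqrt (real (card J)) * ?B" if \<beta>: "\<beta> \<in> MI i" for \<beta>
  proof (rule cSUP_least[OF ne])
    fix x assume x: "x \<in> \<Omega>"
    have "length (multiindex_dirs \<beta>) = i" using \<beta> length_multiindex_dirs unfolding MI_def by auto
    then have "\<bar>Dm \<beta> (F j) x\<bar> \<le> ?B" if "j \<in> J" for j
      using F[OF that] x unfolding deriv_bounds_def deriv_bounds_upto_def Dm_eq_Dl by (metis order_refl)
    then have "(\<Sum>j\<in>J. (Dm \<beta> (F j) x)\<^sup>2) \<le> (\<Sum>j\<in>J. ?B\<^sup>2)"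
      by (intro sum_mono) (use B0 in \<open>simp add: abs_le_square_iff[symmetric]\<close>)
    then have "sqrt (\<Sum>j\<in>J. (Dm \<beta> (F j) x)\<^sup>2) \<le> sqrt (real (card J) * ?B\<^sup>2)"
      by (simp add: real_sqrt_le_mono)
    also have "\<dots> = sqrt (real (card J)) * ?B" using B0 by (simp add: real_sqrt_mult)
    finally show "sqrt (\<Sum>j\<in>J. (Dm \<beta> (F j) x)\<^sup>2) \<le> sqrt (real (card J)) * ?B" .
  qed
  then have "semi \<Omega> J F i \<le> (\<Sum>\<beta>\<in>(MI i :: ('n \<Rightarrow> nat) set). sqrt (real (card J)) * ?B)"
    unfolding semi_def by (rule sum_mono)
  then show ?thesis by simp
qed

lemma cnorm_le_deriv_bounds:
  fixes F :: "'j \<Rightarrow> real^'n::finite \<Rightarrow> real"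
  assumes ne: "\<Omega> \<noteq> {}" and s: "0 \<le> s" and W: "1 \<le> W" and K: "mono_nonneg K"
    and F: "\<And>j. j \<in> J \<Longrightarrow> deriv_bounds \<Omega> W s K (F j)"
  shows "cnorm \<Omega> J F k \<le> s * W ^ k * (\<Sum>i\<le>k. real (card (MI i :: ('n \<Rightarrow> nat) set)) * sqrt (real (card J)) * K i)"
proof -
  have "cnorm \<Omega> J F k \<le> (\<Sum>i\<le>k. real (card (MI i :: ('n \<Rightarrow> nat) set)) * (sqrt (real (card J)) * (s * K i * W ^ i)))"
    unfolding cnorm_def by (rule sum_mono) (rule semi_le_deriv_bounds[OF ne s W K F])
  also have "\<dots> \<le> (\<Sum>i\<le>k. s * W ^ k * (real (card (MI i :: ('n \<Rightarrow> nat) set)) * sqrt (real (card J)) * K i))"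
  proof (rule sum_mono)
    fix i assume "i \<in> {..k}"
    then have "W ^ i \<le> W ^ k" using W by (simp add: power_increasing)
    moreover have "0 \<le> real (card (MI i :: ('n \<Rightarrow> nat) set)) * sqrt (real (card J)) * (s * K i)"
      using s K by (simp add: mono_nonneg_nonneg)
    ultimately show "real (card (MI i :: ('n \<Rightarrow> nat) set)) * (sqrt (real (card J)) * (s * K i * W ^ i))
        \<le> s * W ^ k * (real (card (MI i :: ('n \<Rightarrow> nat) set)) * sqrt (real (card J)) * K i)"
      using mult_left_mono by (fastforce simp: algebra_simps)
  qed
  also have "\<dots> = s * W ^ k * (\<Sum>i\<le>k. real (card (MI i :: ('n \<Rightarrow> nat) set)) * sqrt (real (card J)) * K i)"
    by (simp add: sum_distrib_left)
  finally show ?thesis .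
qed

lemma ents_apply: "ents h PQ x = h x $ fst PQ $ snd PQ"
  by (cases PQ) (simp add: ents_def)

definition matrix_unit :: "'n::finite \<times> 'n \<Rightarrow> real^'n^'n" where
  "matrix_unit PQ = (\<chi> i j. if i = fst PQ \<and> j = snd PQ then 1 else 0)"

lemma matrix_eq_sum_units: "(M :: real^'n::finite^'n) = (\<Sum>PQ\<in>UNIV. (M $ fst PQ $ snd PQ) *\<^sub>R matrix_unit PQ)"
proof -
  have "(\<Sum>PQ\<in>UNIV. (M $ fst PQ $ snd PQ) *\<^sub>R matrix_unit PQ) $ i $ j = M $ i $ j" for i j
  proof -
    have "(\<Sum>PQ\<in>UNIV. (M $ fst PQ $ snd PQ) *\<^sub>R matrix_unit PQ) $ i $ j
        = (\<Sum>PQ\<in>UNIV. (M $ fst PQ $ snd PQ) * (if i = fst PQ \<and> j = snd PQ then 1 else 0))"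
      by (simp add: matrix_unit_def)
    also have "\<dots> = (\<Sum>PQ\<in>{(i,j)}. (M $ fst PQ $ snd PQ) * (if i = fst PQ \<and> j = snd PQ then 1 else 0))"
      by (rule sum.mono_neutral_right) auto
    finally show ?thesis by simp
  qed
  then show ?thesis by (simp add: vec_eq_iff)
qed

lemma linear_matrix_expand:
  assumes "linear (L :: real^'n::finite^'n \<Rightarrow> real)"
  shows "L M = (\<Sum>PQ\<in>UNIV. M $ fst PQ $ snd PQ * L (matrix_unit PQ))"
  by (subst matrix_eq_sum_units) (simp add: linear_sum[OF assms] linear_scale[OF assms])

lemma sum_UNIV_prod: "(\<Sum>PQ\<in>UNIV. f (fst PQ) (snd PQ)) = (\<Sum>p\<in>UNIV. \<Sum>q\<in>UNIV. (f p q :: real))"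
  by (simp add: sum.cartesian_product case_prod_beta flip: UNIV_Times_UNIV)

lemma norm_matrix_eq: "norm (M :: real^'n::finite^'n) = sqrt (\<Sum>PQ\<in>UNIV. (M $ fst PQ $ snd PQ)\<^sup>2)"
  by (simp add: norm_vec_def L2_set_def sum_nonneg sum_UNIV_prod[of "\<lambda>p q. (M $ p $ q)\<^sup>2"])

lemma norm_matrix_le: "norm (M :: real^'n::finite^'n) \<le> (\<Sum>PQ\<in>UNIV. \<bar>M $ fst PQ $ snd PQ\<bar>)"
proof -
  have "norm M \<le> (\<Sum>p\<in>UNIV. \<bar>norm (M $ p)\<bar>)"
    using L2_set_le_sum_abs[of "\<lambda>p. norm (M $ p)" UNIV] by (simp add: norm_vec_def)
  also have "\<dots> \<le> (\<Sum>p\<in>UNIV. \<Sum>q\<in>UNIV. \<bar>M $ p $ q\<bar>)"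
    by (rule sum_mono) (simp add: norm_le_l1_cart)
  finally show ?thesis by (simp add: sum_UNIV_prod[of "\<lambda>p q. \<bar>M $ p $ q\<bar>"])
qed

lemma transpose_diff: "transpose (A - B) = transpose A - transpose (B :: 'a::ab_group_add^'n^'m)"
  by (simp add: transpose_def vec_eq_iff)

lemma abs_entry_le_norm: "\<bar>(M :: real^'n::finite^'n) $ p $ q\<bar> \<le> norm M"
  using component_le_norm_cart[of "M $ p" q] Finite_Cartesian_Product.norm_nth_le[where x=M and i=p] by (simp add: order_trans)

section \<open>The iteration\<close>

lemma finite_Pairs: "finite (Pairs k)"
  unfolding Pairs_def by (rule finite_subset[of _ "{..k} \<times> {..k}"]) auto

lemma diag_in_Pairs: "i < k \<Longrightarrow> (i,i) \<in> Pairs k"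
  by (simp add: Pairs_def)

definition grad_metric :: "(nat \<Rightarrow> real) \<Rightarrow> (nat \<times> nat \<Rightarrow> real^'n::finite \<Rightarrow> real) \<Rightarrow> real^'n \<Rightarrow> real^'n^'n" where
  "grad_metric \<mu> a x = (\<Sum>i<CARD('n). inverse ((\<mu> (Suc i))\<^sup>2) *\<^sub>R outer (grad (a (i,i)) x) (grad (a (i,i)) x))"

lemma grad_metric_entry:
  fixes a :: "nat \<times> nat \<Rightarrow> real^'n::finite \<Rightarrow> real"
  shows "grad_metric \<mu> a x $ p $ q
    = (\<Sum>i<CARD('n). inverse ((\<mu> (Suc i))\<^sup>2) * (partial p (a (i,i)) x * partial q (a (i,i)) x))"
  by (simp add: grad_metric_def outer_def grad_def)

lemma transpose_grad_metric: "transpose (grad_metric \<mu> a x) = grad_metric \<mu> a x"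
  by (simp add: vec_eq_iff transpose_def grad_metric_entry ac_simps)

lemma grad_metric_entry_diff:
  fixes a b :: "nat \<times> nat \<Rightarrow> real^'n::finite \<Rightarrow> real"
  assumes "\<And>i. i < CARD('n) \<Longrightarrow> a (i,i) differentiable (at x) \<and> b (i,i) differentiable (at x)"
  shows "grad_metric \<mu> a x $ p $ q - grad_metric \<mu> b x $ p $ q
    = (\<Sum>i<CARD('n). inverse ((\<mu> (Suc i))\<^sup>2) *
        (partial p (\<lambda>y. a (i,i) y - b (i,i) y) x * partial q (a (i,i)) x
         + partial p (b (i,i)) x * partial q (\<lambda>y. a (i,i) y - b (i,i) y) x))"
proof -
  have "inverse ((\<mu> (Suc i))\<^sup>2) * (partial p (\<lambda>y. a (i,i) y - b (i,i) y) x * partial q (a (i,i)) x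
         + partial p (b (i,i)) x * partial q (\<lambda>y. a (i,i) y - b (i,i) y) x)
      = inverse ((\<mu> (Suc i))\<^sup>2) * (partial p (a (i,i)) x * partial q (a (i,i)) x)
        - inverse ((\<mu> (Suc i))\<^sup>2) * (partial p (b (i,i)) x * partial q (b (i,i)) x)"
    if "i < CARD('n)" for i
    using assms[OF that] by (simp add: partial_diff algebra_simps)
  then show ?thesis by (simp add: grad_metric_entry sum_subtractf)
qed

text \<open>Starting from zero, each iterate solves the algebraic part of the decomposition exactly
  for the gradient term of its predecessor.\<close>

primrec iterate :: "(nat \<times> nat \<Rightarrow> real^'n::finite^'n \<Rightarrow> real) \<Rightarrow> (real^'n \<Rightarrow> real^'n^'n) \<Rightarrow> (nat \<Rightarrow> real)
    \<Rightarrow> nat \<Rightarrow> nat \<times> nat \<Rightarrow> real^'n \<Rightarrow> real" where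
  "iterate L h \<mu> 0 = (\<lambda>P x. 0)"
| "iterate L h \<mu> (Suc j) = (\<lambda>P x. sqrt (L P (h x - grad_metric \<mu> (iterate L h \<mu> j) x)))"

text \<open>Constants for the derivative bounds, in terms of the dimension N, the size CL of the maps
  L P and a bound ch on the entries of h: the entries of the gradient term (relative to \<epsilon> ^ 2),
  the coefficients L P (h - grad_metric \<mu> a), the iterates, the entries of the difference of
  two consecutive gradient terms and the increments (relative to \<epsilon> ^ (2 * j)); metric_size_const i
  bounds the norm of the i-th gradient term relative to \<epsilon> ^ 2.\<close>

definition grad_metric_consts :: "real \<Rightarrow> (nat \<Rightarrow> real) \<Rightarrow> nat \<Rightarrow> real" where
  "grad_metric_consts N Ka l = N * (2 ^ l * Ka (Suc l) * Ka (Suc l))"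

definition coefficient_consts :: "real \<Rightarrow> real \<Rightarrow> real \<Rightarrow> (nat \<Rightarrow> real) \<Rightarrow> nat \<Rightarrow> real" where
  "coefficient_consts N CL ch Ka l = CL * (ch + grad_metric_consts N Ka l)"

primrec iterate_consts :: "real \<Rightarrow> real \<Rightarrow> real \<Rightarrow> real \<Rightarrow> nat \<Rightarrow> nat \<Rightarrow> real" where
  "iterate_consts N CL ch \<sigma> 0 = (\<lambda>_. 0)"
| "iterate_consts N CL ch \<sigma> (Suc j) = sqrt_consts \<sigma> (coefficient_consts N CL ch (iterate_consts N CL ch \<sigma> j))"

definition grad_metric_diff_consts :: "real \<Rightarrow> (nat \<Rightarrow> real) \<Rightarrow> (nat \<Rightarrow> real) \<Rightarrow> (nat \<Rightarrow> real) \<Rightarrow> nat \<Rightarrow> real" where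
  "grad_metric_diff_consts N Kd Ka Kb l = N * (2 ^ l * Kd (Suc l) * Ka (Suc l) + 2 ^ l * Kb (Suc l) * Kd (Suc l))"

primrec increment_consts :: "real \<Rightarrow> real \<Rightarrow> real \<Rightarrow> real \<Rightarrow> nat \<Rightarrow> nat \<Rightarrow> real" where
  "increment_consts N CL ch \<sigma> 0 = iterate_consts N CL ch \<sigma> 1"
| "increment_consts N CL ch \<sigma> (Suc j) = (\<lambda>l. 2 ^ l * (CL * grad_metric_diff_consts N (increment_consts N CL ch \<sigma> j)
      (iterate_consts N CL ch \<sigma> j) (iterate_consts N CL ch \<sigma> (Suc j)) l)
      * inverse_consts (2 * sqrt \<sigma>) (\<lambda>l. iterate_consts N CL ch \<sigma> (Suc j) l + iterate_consts N CL ch \<sigma> (Suc (Suc j)) l) l)"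

definition metric_size_const :: "real \<Rightarrow> real \<Rightarrow> real \<Rightarrow> real \<Rightarrow> nat \<Rightarrow> real" where
  "metric_size_const N CL ch \<sigma> i = N\<^sup>2 * grad_metric_consts N (iterate_consts N CL ch \<sigma> i) 0"

lemma mono_nonneg_grad_metric_consts: "mono_nonneg Ka \<Longrightarrow> 0 \<le> N \<Longrightarrow> mono_nonneg (grad_metric_consts N Ka)"
  unfolding grad_metric_consts_def by (intro mono_nonneg_cmult mono_nonneg_Leibniz mono_nonneg_shift) auto

lemma mono_nonneg_coefficient_consts:
  "mono_nonneg Ka \<Longrightarrow> 0 \<le> N \<Longrightarrow> 0 \<le> CL \<Longrightarrow> 0 \<le> ch \<Longrightarrow> mono_nonneg (coefficient_consts N CL ch Ka)"
  unfolding coefficient_consts_def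
  by (intro mono_nonneg_cmult mono_nonneg_add mono_nonneg_const mono_nonneg_grad_metric_consts) auto

lemma mono_nonneg_iterate_consts:
  "0 \<le> N \<Longrightarrow> 0 \<le> CL \<Longrightarrow> 0 \<le> ch \<Longrightarrow> mono_nonneg (iterate_consts N CL ch \<sigma> j)"
  by (induction j) (auto intro!: mono_nonneg_sqrt_consts mono_nonneg_coefficient_consts mono_nonneg_const)

lemma mono_nonneg_grad_metric_diff_consts:
  "mono_nonneg Kd \<Longrightarrow> mono_nonneg Ka \<Longrightarrow> mono_nonneg Kb \<Longrightarrow> 0 \<le> N
    \<Longrightarrow> mono_nonneg (grad_metric_diff_consts N Kd Ka Kb)"
  unfolding grad_metric_diff_consts_def
  by (intro mono_nonneg_cmult mono_nonneg_add mono_nonneg_Leibniz mono_nonneg_shift) auto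

lemma mono_nonneg_increment_consts:
  "0 \<le> N \<Longrightarrow> 0 \<le> CL \<Longrightarrow> 0 \<le> ch \<Longrightarrow> 0 < \<sigma> \<Longrightarrow> mono_nonneg (increment_consts N CL ch \<sigma> j)"
proof (induction j)
  case 0
  then show ?case by (simp only: increment_consts.simps) (rule mono_nonneg_iterate_consts)
next
  case (Suc j)
  then show ?case unfolding increment_consts.simps
    by (intro mono_nonneg_Leibniz mono_nonneg_cmult mono_nonneg_grad_metric_diff_consts
        mono_nonneg_inverse_consts mono_nonneg_add mono_nonneg_iterate_consts) auto
qed

text \<open>W plays \<mu> 0 and \<epsilon> plays \<mu> 0 / \<mu> 1; the coefficient maps L are those of sigma_star_prop,
  CL bounds their size and ch the entries of h.\<close>

locale decomposition_setting =
  fixes S :: "(real^'n::finite) set" and W \<epsilon> \<sigma> CL ch :: real and \<mu> :: "nat \<Rightarrow> real"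
    and h :: "real^'n \<Rightarrow> real^'n^'n" and L :: "nat \<times> nat \<Rightarrow> real^'n^'n \<Rightarrow> real"
  assumes S: "open S" and W: "1 \<le> W" and eps: "0 < \<epsilon>" "\<epsilon> \<le> 1"
    and mu: "\<And>i. i < CARD('n) \<Longrightarrow> inverse ((\<mu> (Suc i))\<^sup>2) * W\<^sup>2 \<le> \<epsilon>\<^sup>2"
    and sig: "0 < \<sigma>"
    and L_linear: "\<And>P. P \<in> Pairs CARD('n) \<Longrightarrow> linear (L P)"
    and L_decomposition: "\<And>H. transpose H = H \<Longrightarrow> H = (\<Sum>P\<in>Pairs CARD('n). L P H *\<^sub>R outer (xi P) (xi P))"
    and L_ge: "\<And>H P. transpose H = H \<Longrightarrow> norm (H - hstar) \<le> 2 * \<sigma> \<Longrightarrow> P \<in> Pairs CARD('n) \<Longrightarrow> \<sigma> \<le> L P H"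
    and CL: "CL = (\<Sum>P\<in>Pairs CARD('n). \<Sum>PQ\<in>UNIV. \<bar>L P (matrix_unit PQ)\<bar>)"
    and ch: "1 \<le> ch"
    and h_bounds: "\<And>PQ. deriv_bounds S W 1 (\<lambda>_. ch) (ents h PQ)"
    and h_symmetric: "\<And>x. x \<in> S \<Longrightarrow> transpose (h x) = h x"
    and h_near: "\<And>x. x \<in> S \<Longrightarrow> norm (h x - hstar) \<le> \<sigma>"
begin

lemma CL_nonneg: "0 \<le> CL"
  unfolding CL by (simp add: sum_nonneg)

lemma sum_abs_L_le_CL: "P \<in> Pairs CARD('n) \<Longrightarrow> (\<Sum>PQ\<in>UNIV. \<bar>L P (matrix_unit PQ)\<bar>) \<le> CL"
  unfolding CL by (rule member_le_sum) (auto simp: sum_nonneg finite_Pairs)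

lemma deriv_bounds_grad_metric:
  fixes a :: "nat \<times> nat \<Rightarrow> real^'n \<Rightarrow> real"
  assumes Ka: "mono_nonneg Ka" and a: "\<And>i. i < CARD('n) \<Longrightarrow> deriv_bounds S W 1 Ka (a (i,i))"
  shows "deriv_bounds S W (\<epsilon>\<^sup>2) (grad_metric_consts (real CARD('n)) Ka) (\<lambda>x. grad_metric \<mu> a x $ p $ q)"
proof -
  let ?K = "\<lambda>l. 2 ^ l * Ka (Suc l) * Ka (Suc l)"
  have t: "deriv_bounds S W (\<epsilon>\<^sup>2) ?K
      (\<lambda>x. inverse ((\<mu> (Suc i))\<^sup>2) * (partial p (a (i,i)) x * partial q (a (i,i)) x))"
    if i: "i \<in> {..<CARD('n)}" for i
  proof -
    have "deriv_bounds S W ((1 * W) * (1 * W)) ?K (\<lambda>x. partial p (a (i,i)) x * partial q (a (i,i)) x)"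
      by (rule deriv_bounds_mult[OF S W _ _ mono_nonneg_shift[OF Ka] mono_nonneg_shift[OF Ka]
            deriv_bounds_partial deriv_bounds_partial]) (use W a i in auto)
    from deriv_bounds_cmult[OF S this, of "inverse ((\<mu> (Suc i))\<^sup>2)"] show ?thesis
    proof (rule deriv_bounds_mono)
      show "\<bar>inverse ((\<mu> (Suc i))\<^sup>2)\<bar> * (1 * W * (1 * W)) \<le> \<epsilon>\<^sup>2"
        using mu[of i] i by (simp add: power2_eq_square)
    qed (use W mono_nonneg_nonneg[OF mono_nonneg_Leibniz[OF mono_nonneg_shift[OF Ka] mono_nonneg_shift[OF Ka]]] in auto)
  qed
  have "deriv_bounds S W (\<epsilon>\<^sup>2) (\<lambda>l. \<Sum>i<CARD('n). ?K l)
      (\<lambda>x. \<Sum>i<CARD('n). inverse ((\<mu> (Suc i))\<^sup>2) * (partial p (a (i,i)) x * partial q (a (i,i)) x))"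
    by (rule deriv_bounds_sum[OF S _ _ t]) auto
  then show ?thesis by (simp add: grad_metric_entry grad_metric_consts_def[abs_def])
qed

lemma norm_grad_metric_le:
  fixes a :: "nat \<times> nat \<Rightarrow> real^'n \<Rightarrow> real"
  assumes Ka: "mono_nonneg Ka" and a: "\<And>i. i < CARD('n) \<Longrightarrow> deriv_bounds S W 1 Ka (a (i,i))" and x: "x \<in> S"
  shows "norm (grad_metric \<mu> a x) \<le> \<epsilon>\<^sup>2 * ((real CARD('n))\<^sup>2 * grad_metric_consts (real CARD('n)) Ka 0)"
proof -
  have "norm (grad_metric \<mu> a x) \<le> (\<Sum>PQ\<in>UNIV. \<bar>grad_metric \<mu> a x $ fst PQ $ snd PQ\<bar>)" by (rule norm_matrix_le)
  also have "\<dots> \<le> (\<Sum>PQ\<in>(UNIV :: ('n \<times> 'n) set). \<epsilon>\<^sup>2 * grad_metric_consts (real CARD('n)) Ka 0)"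
    by (rule sum_mono) (rule deriv_bounds_abs_le[OF deriv_bounds_grad_metric[where a=a, OF Ka a] x])
  also have "\<dots> = \<epsilon>\<^sup>2 * ((real CARD('n))\<^sup>2 * grad_metric_consts (real CARD('n)) Ka 0)"
    using card_cartesian_product[of "UNIV::'n set" "UNIV::'n set"] by (simp add: power2_eq_square)
  finally show ?thesis .
qed

lemma deriv_bounds_L:
  fixes M :: "real^'n \<Rightarrow> real^'n^'n"
  assumes P: "P \<in> Pairs CARD('n)" and K: "mono_nonneg K"
    and M: "\<And>PQ. deriv_bounds S W s K (\<lambda>x. M x $ fst PQ $ snd PQ)" and s: "0 \<le> s"
  shows "deriv_bounds S W s (\<lambda>l. CL * K l) (\<lambda>x. L P (M x))"
proof -
  have t: "deriv_bounds S W s (\<lambda>l. \<bar>L P (matrix_unit PQ)\<bar> * K l)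
      (\<lambda>x. L P (matrix_unit PQ) * M x $ fst PQ $ snd PQ)" for PQ
    by (rule deriv_bounds_rescale) (use deriv_bounds_cmult[OF S M[of PQ], of "L P (matrix_unit PQ)"] in auto)
  have e: "(\<lambda>x. \<Sum>PQ\<in>UNIV. L P (matrix_unit PQ) * M x $ fst PQ $ snd PQ) = (\<lambda>x. L P (M x))"
    by (rule ext, subst linear_matrix_expand[OF L_linear[OF P]]) (simp add: mult.commute)
  have "deriv_bounds S W s (\<lambda>l. \<Sum>PQ\<in>UNIV. \<bar>L P (matrix_unit PQ)\<bar> * K l)
      (\<lambda>x. \<Sum>PQ\<in>UNIV. L P (matrix_unit PQ) * M x $ fst PQ $ snd PQ)"
    by (rule deriv_bounds_sum[OF S _ s t]) auto
  then have "deriv_bounds S W s (\<lambda>l. \<Sum>PQ\<in>UNIV. \<bar>L P (matrix_unit PQ)\<bar> * K l) (\<lambda>x. L P (M x))"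
    unfolding e .
  then show ?thesis
  proof (rule deriv_bounds_mono)
    fix l
    have "(\<Sum>PQ\<in>UNIV. \<bar>L P (matrix_unit PQ)\<bar> * K l) = (\<Sum>PQ\<in>UNIV. \<bar>L P (matrix_unit PQ)\<bar>) * K l"
      by (simp add: sum_distrib_right)
    also have "\<dots> \<le> CL * K l"
      using sum_abs_L_le_CL[OF P] mono_nonneg_nonneg[OF K] by (rule mult_right_mono)
    finally show "(\<Sum>PQ\<in>UNIV. \<bar>L P (matrix_unit PQ)\<bar> * K l) \<le> CL * K l" .
    show "0 \<le> (\<Sum>PQ\<in>UNIV. \<bar>L P (matrix_unit PQ)\<bar> * K l)"
      using mono_nonneg_nonneg[OF K] by (intro sum_nonneg) auto
  qed (use s W in auto)
qed

lemma deriv_bounds_coefficient: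
  fixes a :: "nat \<times> nat \<Rightarrow> real^'n \<Rightarrow> real"
  assumes Ka: "mono_nonneg Ka" and a: "\<And>i. i < CARD('n) \<Longrightarrow> deriv_bounds S W 1 Ka (a (i,i))" and P: "P \<in> Pairs CARD('n)"
  shows "deriv_bounds S W 1 (coefficient_consts (real CARD('n)) CL ch Ka) (\<lambda>x. L P (h x - grad_metric \<mu> a x))"
proof -
  let ?KG = "grad_metric_consts (real CARD('n)) Ka"
  have KG: "mono_nonneg ?KG" by (rule mono_nonneg_grad_metric_consts[OF Ka]) simp
  have "deriv_bounds S W 1 ?KG (\<lambda>x. (- 1) * grad_metric \<mu> a x $ fst PQ $ snd PQ)" for PQ
    using deriv_bounds_cmult[OF S deriv_bounds_grad_metric[where a=a, OF Ka a], of "- 1"]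
    by (rule deriv_bounds_mono) (use eps KG W in \<open>auto simp: mono_nonneg_nonneg power_le_one\<close>)
  from deriv_bounds_add[OF S _ h_bounds this]
  have "deriv_bounds S W 1 (\<lambda>l. ch + ?KG l) (\<lambda>x. (h x - grad_metric \<mu> a x) $ fst PQ $ snd PQ)" for PQ
    by (simp add: ents_apply)
  from deriv_bounds_L[OF P _ this] show ?thesis
    unfolding coefficient_consts_def using ch KG by (simp add: mono_nonneg_add mono_nonneg_const)
qed

lemma symmetric_h_minus_grad_metric: "x \<in> S \<Longrightarrow> transpose (h x - grad_metric \<mu> a x) = h x - grad_metric \<mu> a x"
  using h_symmetric by (simp add: transpose_diff transpose_grad_metric)

lemma coefficient_ge:
  fixes a :: "nat \<times> nat \<Rightarrow> real^'n \<Rightarrow> real"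
  assumes Ka: "mono_nonneg Ka" and a: "\<And>i. i < CARD('n) \<Longrightarrow> deriv_bounds S W 1 Ka (a (i,i))" and x: "x \<in> S"
    and small: "\<epsilon>\<^sup>2 * ((real CARD('n))\<^sup>2 * grad_metric_consts (real CARD('n)) Ka 0) \<le> \<sigma>"
    and P: "P \<in> Pairs CARD('n)"
  shows "\<sigma> \<le> L P (h x - grad_metric \<mu> a x)"
proof (rule L_ge[OF symmetric_h_minus_grad_metric[OF x] _ P])
  have "norm (h x - grad_metric \<mu> a x - hstar) \<le> norm (h x - hstar) + norm (grad_metric \<mu> a x)"
    using norm_triangle_ineq4[of "h x - hstar" "grad_metric \<mu> a x"] by (simp add: algebra_simps)
  then show "norm (h x - grad_metric \<mu> a x - hstar) \<le> 2 * \<sigma>"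
    using h_near[OF x] norm_grad_metric_le[where a=a, OF Ka a x] small by linarith
qed

abbreviation A :: "nat \<Rightarrow> nat \<times> nat \<Rightarrow> real^'n \<Rightarrow> real" where
  "A \<equiv> iterate L h \<mu>"

lemma iterate_consts_mono_nonneg: "mono_nonneg (iterate_consts (real CARD('n)) CL ch \<sigma> i)"
  by (rule mono_nonneg_iterate_consts) (use CL_nonneg ch in auto)

lemma increment_consts_mono_nonneg: "mono_nonneg (increment_consts (real CARD('n)) CL ch \<sigma> i)"
  by (rule mono_nonneg_increment_consts) (use CL_nonneg ch sig in auto)

lemma coefficient_decomposition:
  "x \<in> S \<Longrightarrow> (\<Sum>P\<in>Pairs CARD('n). L P (h x - grad_metric \<mu> a x) *\<^sub>R outer (xi P) (xi P)) = h x - grad_metric \<mu> a x"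
  using L_decomposition[OF symmetric_h_minus_grad_metric] by simp

text \<open>The gradient term is quadratic in the gradients, so it gains a factor \<epsilon> ^ 2 on differences.\<close>

lemma deriv_bounds_grad_metric_diff:
  fixes a b :: "nat \<times> nat \<Rightarrow> real^'n \<Rightarrow> real"
  assumes Ka: "mono_nonneg Ka" and Kb: "mono_nonneg Kb" and Kd: "mono_nonneg Kd" and s: "0 \<le> s"
    and a: "\<And>k. k < CARD('n) \<Longrightarrow> deriv_bounds S W 1 Ka (a (k,k))"
    and b: "\<And>k. k < CARD('n) \<Longrightarrow> deriv_bounds S W 1 Kb (b (k,k))"
    and d: "\<And>k. k < CARD('n) \<Longrightarrow> deriv_bounds S W s Kd (\<lambda>x. a (k,k) x - b (k,k) x)"
  shows "deriv_bounds S W (s * \<epsilon>\<^sup>2) (grad_metric_diff_consts (real CARD('n)) Kd Ka Kb)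
    (\<lambda>x. grad_metric \<mu> a x $ p $ q - grad_metric \<mu> b x $ p $ q)"
proof -
  let ?K1 = "\<lambda>l. 2 ^ l * Kd (Suc l) * Ka (Suc l)" and ?K2 = "\<lambda>l. 2 ^ l * Kb (Suc l) * Kd (Suc l)"
  let ?d = "\<lambda>k x. a (k,k) x - b (k,k) x"
  let ?T = "\<lambda>k x. inverse ((\<mu> (Suc k))\<^sup>2) *
    (partial p (?d k) x * partial q (a (k,k)) x + partial p (b (k,k)) x * partial q (?d k) x)"
  have t: "deriv_bounds S W (s * \<epsilon>\<^sup>2) (\<lambda>l. ?K1 l + ?K2 l) (?T k)" if k: "k \<in> {..<CARD('n)}" for k
  proof -
    have k': "k < CARD('n)" using k by simp
    have "deriv_bounds S W ((s * W) * (1 * W)) ?K1 (\<lambda>x. partial p (?d k) x * partial q (a (k,k)) x)"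
      by (rule deriv_bounds_mult[OF S W _ _ mono_nonneg_shift[OF Kd] mono_nonneg_shift[OF Ka]
            deriv_bounds_partial[OF d[OF k']] deriv_bounds_partial[OF a[OF k']]]) (use s W in auto)
    moreover have "deriv_bounds S W ((1 * W) * (s * W)) ?K2 (\<lambda>x. partial p (b (k,k)) x * partial q (?d k) x)"
      by (rule deriv_bounds_mult[OF S W _ _ mono_nonneg_shift[OF Kb] mono_nonneg_shift[OF Kd]
            deriv_bounds_partial[OF b[OF k']] deriv_bounds_partial[OF d[OF k']]]) (use s W in auto)
    ultimately have "deriv_bounds S W (s * W * W) (\<lambda>l. ?K1 l + ?K2 l)
        (\<lambda>x. partial p (?d k) x * partial q (a (k,k)) x + partial p (b (k,k)) x * partial q (?d k) x)"
      using s W by (intro deriv_bounds_add[OF S]) (auto simp: ac_simps)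
    from deriv_bounds_cmult[OF S this, of "inverse ((\<mu> (Suc k))\<^sup>2)"] show ?thesis
    proof (rule deriv_bounds_mono)
      have "inverse ((\<mu> (Suc k))\<^sup>2) * W\<^sup>2 * s \<le> \<epsilon>\<^sup>2 * s" using mu[OF k'] s by (intro mult_right_mono) auto
      then show "\<bar>inverse ((\<mu> (Suc k))\<^sup>2)\<bar> * (s * W * W) \<le> s * \<epsilon>\<^sup>2" by (simp add: power2_eq_square ac_simps)
      show "0 \<le> \<bar>inverse ((\<mu> (Suc k))\<^sup>2)\<bar> * (s * W * W)" using s W by simp
      show "\<And>i. 0 \<le> ?K1 i + ?K2 i" using Ka Kb Kd by (simp add: mono_nonneg_nonneg)
    qed (use W in auto)
  qed
  have sum: "deriv_bounds S W (s * \<epsilon>\<^sup>2) (\<lambda>l. \<Sum>k<CARD('n). ?K1 l + ?K2 l) (\<lambda>x. \<Sum>k<CARD('n). ?T k x)"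
    by (rule deriv_bounds_sum[OF S _ _ t]) (use s in auto)
  have "(\<Sum>k<CARD('n). ?T k x) = grad_metric \<mu> a x $ p $ q - grad_metric \<mu> b x $ p $ q" if "x \<in> S" for x
    using deriv_bounds_differentiable_on[OF a] deriv_bounds_differentiable_on[OF b] S that
    by (intro grad_metric_entry_diff[symmetric]) (auto simp: differentiable_on_eq_differentiable_at)
  from deriv_bounds_cong[OF S this sum] show ?thesis
    by (simp add: grad_metric_diff_consts_def[abs_def])
qed

lemma deriv_bounds_iterate:
  assumes small: "\<forall>i\<le>j. \<epsilon>\<^sup>2 * metric_size_const (real CARD('n)) CL ch \<sigma> i \<le> \<sigma>"
  shows "i \<le> Suc j \<Longrightarrow> P \<in> Pairs CARD('n) \<Longrightarrow> deriv_bounds S W 1 (iterate_consts (real CARD('n)) CL ch \<sigma> i) (A i P)"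
proof (induction i arbitrary: P)
  case 0
  then show ?case using deriv_bounds_zero by simp
next
  case (Suc i)
  have a: "\<And>k. k < CARD('n) \<Longrightarrow> deriv_bounds S W 1 (iterate_consts (real CARD('n)) CL ch \<sigma> i) (A i (k,k))"
    using Suc diag_in_Pairs by simp
  have "deriv_bounds S W 1 (coefficient_consts (real CARD('n)) CL ch (iterate_consts (real CARD('n)) CL ch \<sigma> i))
      (\<lambda>x. L P (h x - grad_metric \<mu> (A i) x))"
    by (rule deriv_bounds_coefficient[where a="A i", OF iterate_consts_mono_nonneg a Suc.prems(2)])
  moreover have "\<sigma> \<le> L P (h x - grad_metric \<mu> (A i) x)" if "x \<in> S" for x
    by (rule coefficient_ge[where a="A i", OF iterate_consts_mono_nonneg a that _ Suc.prems(2)])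
       (use small Suc.prems in \<open>auto simp: metric_size_const_def\<close>)
  ultimately show ?case
    using deriv_bounds_sqrt[OF S W mono_nonneg_coefficient_consts[OF iterate_consts_mono_nonneg] sig]
      CL_nonneg ch by simp
qed

lemma iterate_ge:
  assumes small: "\<forall>i\<le>j. \<epsilon>\<^sup>2 * metric_size_const (real CARD('n)) CL ch \<sigma> i \<le> \<sigma>"
    and i: "i \<le> j" and P: "P \<in> Pairs CARD('n)" and x: "x \<in> S"
  shows "\<sigma> \<le> L P (h x - grad_metric \<mu> (A i) x)" and "sqrt \<sigma> \<le> A (Suc i) P x"
proof -
  have a: "\<And>k. k < CARD('n) \<Longrightarrow> deriv_bounds S W 1 (iterate_consts (real CARD('n)) CL ch \<sigma> i) (A i (k,k))"
    using deriv_bounds_iterate[OF small] i diag_in_Pairs by simp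
  show "\<sigma> \<le> L P (h x - grad_metric \<mu> (A i) x)"
    by (rule coefficient_ge[where a="A i", OF iterate_consts_mono_nonneg a x _ P]) (use small i in \<open>auto simp: metric_size_const_def\<close>)
  then show "sqrt \<sigma> \<le> A (Suc i) P x" by simp
qed

lemma deriv_bounds_inverse_iterate_sum:
  assumes small: "\<forall>i\<le>j. \<epsilon>\<^sup>2 * metric_size_const (real CARD('n)) CL ch \<sigma> i \<le> \<sigma>"
    and i: "Suc i \<le> j" and P: "P \<in> Pairs CARD('n)"
  shows "deriv_bounds S W 1 (inverse_consts (2 * sqrt \<sigma>)
      (\<lambda>l. iterate_consts (real CARD('n)) CL ch \<sigma> (Suc i) l + iterate_consts (real CARD('n)) CL ch \<sigma> (Suc (Suc i)) l))
    (\<lambda>x. inverse (A (Suc i) P x + A (Suc (Suc i)) P x))"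
proof (rule deriv_bounds_inverse[OF S W mono_nonneg_add[OF iterate_consts_mono_nonneg iterate_consts_mono_nonneg]])
  show "deriv_bounds S W 1 (\<lambda>l. iterate_consts (real CARD('n)) CL ch \<sigma> (Suc i) l
      + iterate_consts (real CARD('n)) CL ch \<sigma> (Suc (Suc i)) l) (\<lambda>x. A (Suc i) P x + A (Suc (Suc i)) P x)"
    by (rule deriv_bounds_add[OF S _ deriv_bounds_iterate[OF small] deriv_bounds_iterate[OF small]])
       (use i P in auto)
  show "0 < 2 * sqrt \<sigma>" using sig by simp
  fix x assume "x \<in> S"
  then show "2 * sqrt \<sigma> \<le> A (Suc i) P x + A (Suc (Suc i)) P x"
    using iterate_ge(2)[OF small Suc_leD[OF i] P \<open>x \<in> S\<close>] iterate_ge(2)[OF small i P \<open>x \<in> S\<close>]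
    by (simp del: iterate.simps)
qed

lemma deriv_bounds_grad_metric_step:
  assumes small: "\<forall>i\<le>j. \<epsilon>\<^sup>2 * metric_size_const (real CARD('n)) CL ch \<sigma> i \<le> \<sigma>"
    and i: "i \<le> j"
    and incr: "\<And>k. k < CARD('n) \<Longrightarrow> deriv_bounds S W (\<epsilon> ^ (2 * i))
      (increment_consts (real CARD('n)) CL ch \<sigma> i) (\<lambda>x. A i (k,k) x - A (Suc i) (k,k) x)"
  shows "deriv_bounds S W (\<epsilon> ^ (2 * Suc i))
      (grad_metric_diff_consts (real CARD('n)) (increment_consts (real CARD('n)) CL ch \<sigma> i)
        (iterate_consts (real CARD('n)) CL ch \<sigma> i) (iterate_consts (real CARD('n)) CL ch \<sigma> (Suc i)))
    (\<lambda>x. grad_metric \<mu> (A i) x $ p $ q - grad_metric \<mu> (A (Suc i)) x $ p $ q)"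
proof -
  have "deriv_bounds S W (\<epsilon> ^ (2 * i) * \<epsilon>\<^sup>2)
      (grad_metric_diff_consts (real CARD('n)) (increment_consts (real CARD('n)) CL ch \<sigma> i)
        (iterate_consts (real CARD('n)) CL ch \<sigma> i) (iterate_consts (real CARD('n)) CL ch \<sigma> (Suc i)))
      (\<lambda>x. grad_metric \<mu> (A i) x $ p $ q - grad_metric \<mu> (A (Suc i)) x $ p $ q)"
    using deriv_bounds_iterate[OF small] i diag_in_Pairs eps
    by (intro deriv_bounds_grad_metric_diff[where a="A i" and b="A (Suc i)"] iterate_consts_mono_nonneg
        increment_consts_mono_nonneg incr) (auto simp del: iterate.simps iterate_consts.simps)
  then show ?thesis by (simp add: power_add power2_eq_square ac_simps)
qed

lemma deriv_bounds_coefficient_diff: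
  assumes small: "\<forall>i\<le>j. \<epsilon>\<^sup>2 * metric_size_const (real CARD('n)) CL ch \<sigma> i \<le> \<sigma>"
    and i: "i \<le> j" and P: "P \<in> Pairs CARD('n)"
    and incr: "\<And>k. k < CARD('n) \<Longrightarrow> deriv_bounds S W (\<epsilon> ^ (2 * i))
      (increment_consts (real CARD('n)) CL ch \<sigma> i) (\<lambda>x. A i (k,k) x - A (Suc i) (k,k) x)"
  shows "deriv_bounds S W (\<epsilon> ^ (2 * Suc i))
      (\<lambda>l. CL * grad_metric_diff_consts (real CARD('n)) (increment_consts (real CARD('n)) CL ch \<sigma> i)
        (iterate_consts (real CARD('n)) CL ch \<sigma> i) (iterate_consts (real CARD('n)) CL ch \<sigma> (Suc i)) l)
    (\<lambda>x. L P (grad_metric \<mu> (A (Suc i)) x - grad_metric \<mu> (A i) x))"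
proof (rule deriv_bounds_L[OF P mono_nonneg_grad_metric_diff_consts[OF increment_consts_mono_nonneg
      iterate_consts_mono_nonneg iterate_consts_mono_nonneg]])
  fix PQ :: "'n \<times> 'n"
  from deriv_bounds_cmult[OF S deriv_bounds_grad_metric_step[OF small i incr, of "fst PQ" "snd PQ"], of "- 1"]
  show "deriv_bounds S W (\<epsilon> ^ (2 * Suc i))
      (grad_metric_diff_consts (real CARD('n)) (increment_consts (real CARD('n)) CL ch \<sigma> i)
        (iterate_consts (real CARD('n)) CL ch \<sigma> i) (iterate_consts (real CARD('n)) CL ch \<sigma> (Suc i)))
      (\<lambda>x. (grad_metric \<mu> (A (Suc i)) x - grad_metric \<mu> (A i) x) $ fst PQ $ snd PQ)"
    by simp
qed (use eps(1) in \<open>auto intro: zero_le_power\<close>)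

lemma deriv_bounds_increment:
  assumes small: "\<forall>i\<le>j. \<epsilon>\<^sup>2 * metric_size_const (real CARD('n)) CL ch \<sigma> i \<le> \<sigma>"
  shows "i \<le> j \<Longrightarrow> P \<in> Pairs CARD('n) \<Longrightarrow>
    deriv_bounds S W (\<epsilon> ^ (2 * i)) (increment_consts (real CARD('n)) CL ch \<sigma> i) (\<lambda>x. A i P x - A (Suc i) P x)"
proof (induction i arbitrary: P)
  case 0
  then have "deriv_bounds S W 1 (iterate_consts (real CARD('n)) CL ch \<sigma> 1) (A 1 P)"
    by (intro deriv_bounds_iterate[OF small]) auto
  then show ?case using deriv_bounds_cmult[OF S, of W 1 _ "A 1 P" "- 1"] by simp
next
  case (Suc i)
  then have i: "i \<le> j" by simp
  have V: "deriv_bounds S W (\<epsilon> ^ (2 * Suc i))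
      (\<lambda>l. CL * grad_metric_diff_consts (real CARD('n)) (increment_consts (real CARD('n)) CL ch \<sigma> i)
        (iterate_consts (real CARD('n)) CL ch \<sigma> i) (iterate_consts (real CARD('n)) CL ch \<sigma> (Suc i)) l)
      (\<lambda>x. L P (grad_metric \<mu> (A (Suc i)) x - grad_metric \<mu> (A i) x))"
    by (rule deriv_bounds_coefficient_diff[OF small i Suc.prems(2)])
       (use Suc.IH[OF i] diag_in_Pairs in blast)
  have "deriv_bounds S W (\<epsilon> ^ (2 * Suc i) * 1) (increment_consts (real CARD('n)) CL ch \<sigma> (Suc i))
      (\<lambda>x. L P (grad_metric \<mu> (A (Suc i)) x - grad_metric \<mu> (A i) x) * inverse (A (Suc i) P x + A (Suc (Suc i)) P x))"
    unfolding increment_consts.simps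
    by (rule deriv_bounds_mult[OF S W _ _ mono_nonneg_cmult[OF mono_nonneg_grad_metric_diff_consts[OF
          increment_consts_mono_nonneg iterate_consts_mono_nonneg iterate_consts_mono_nonneg] CL_nonneg]
          mono_nonneg_inverse_consts V deriv_bounds_inverse_iterate_sum[OF small Suc.prems]])
       (use eps sig in auto)
  then show ?case unfolding mult_1_right
  proof (rule deriv_bounds_cong[OF S, rotated])
    fix x assume x: "x \<in> S"
    let ?u = "L P (h x - grad_metric \<mu> (A i) x)" and ?v = "L P (h x - grad_metric \<mu> (A (Suc i)) x)"
    have "?u - ?v = L P (grad_metric \<mu> (A (Suc i)) x - grad_metric \<mu> (A i) x)"
      by (simp add: linear_diff[OF L_linear[OF Suc.prems(2)], symmetric])
    moreover have "A (Suc i) P x = sqrt ?u" "A (Suc (Suc i)) P x = sqrt ?v" by simp_all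
    moreover have "\<sigma> \<le> ?u" "\<sigma> \<le> ?v"
      using iterate_ge(1)[OF small i Suc.prems(2) x] iterate_ge(1)[OF small Suc.prems x] by auto
    ultimately show "L P (grad_metric \<mu> (A (Suc i)) x - grad_metric \<mu> (A i) x)
        * inverse (A (Suc i) P x + A (Suc (Suc i)) P x) = A (Suc i) P x - A (Suc (Suc i)) P x"
      using sqrt_diff_eq[of ?u ?v] sig by simp
  qed
qed

end

section \<open>The decomposition\<close>

definition is_decomposition :: "(real^'n::finite) set \<Rightarrow> (nat \<Rightarrow> real) \<Rightarrow> (real^'n \<Rightarrow> real^'n^'n) \<Rightarrow> real
    \<Rightarrow> (nat \<times> nat \<Rightarrow> real^'n \<Rightarrow> real) \<Rightarrow> (real^'n \<Rightarrow> real^'n^'n) \<Rightarrow> bool" where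
  "is_decomposition \<Omega> \<mu> h \<sigma> a E \<longleftrightarrow>
     (\<forall>P\<in>Pairs CARD('n). smooth_cl \<Omega> (a P)) \<and>
     (\<forall>P. smooth_cl \<Omega> (ents E P)) \<and> (\<forall>x\<in>\<Omega>. transpose (E x) = E x) \<and>
     (\<forall>x\<in>\<Omega>. h x = (\<Sum>P\<in>Pairs CARD('n). (a P x)\<^sup>2 *\<^sub>R outer (xi P) (xi P))
                   + (\<Sum>i<CARD('n). inverse ((\<mu> (Suc i))\<^sup>2) *\<^sub>R outer (grad (a (i,i)) x) (grad (a (i,i)) x))
                   + E x) \<and>
     (\<forall>P\<in>Pairs CARD('n). \<forall>x\<in>\<Omega>. a P x \<ge> sqrt \<sigma>)"

definition iterate_norm_const :: "'n::finite itself \<Rightarrow> real \<Rightarrow> real \<Rightarrow> real \<Rightarrow> nat \<Rightarrow> nat \<Rightarrow> real" where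
  "iterate_norm_const (_ :: 'n itself) CL ch \<sigma> j k = (\<Sum>i\<le>k. real (card (MI i :: ('n \<Rightarrow> nat) set))
     * sqrt (real (card (Pairs CARD('n)))) * iterate_consts (real CARD('n)) CL ch \<sigma> (Suc j) i)"

definition error_norm_const :: "'n::finite itself \<Rightarrow> real \<Rightarrow> real \<Rightarrow> real \<Rightarrow> nat \<Rightarrow> nat \<Rightarrow> real" where
  "error_norm_const (_ :: 'n itself) CL ch \<sigma> j k = (\<Sum>i\<le>k. real (card (MI i :: ('n \<Rightarrow> nat) set))
     * sqrt (real (card (UNIV :: ('n \<times> 'n) set)))
     * grad_metric_diff_consts (real CARD('n)) (increment_consts (real CARD('n)) CL ch \<sigma> j)
         (iterate_consts (real CARD('n)) CL ch \<sigma> j) (iterate_consts (real CARD('n)) CL ch \<sigma> (Suc j)) i)"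

definition smallness_threshold :: "real \<Rightarrow> real \<Rightarrow> real \<Rightarrow> real \<Rightarrow> nat \<Rightarrow> real" where
  "smallness_threshold N CL ch \<sigma> j = \<sigma> / (1 + (\<Sum>i\<le>j. metric_size_const N CL ch \<sigma> i))"

text \<open>If \<epsilon> ^ 2 exceeds the smallness threshold of stage j, stage 0 is used instead: \<epsilon> is then bounded
  below, so the factor \<epsilon> ^ (2 * j) is absorbed into the constant.\<close>

definition decomposition_const :: "'n::finite itself \<Rightarrow> real \<Rightarrow> real \<Rightarrow> real \<Rightarrow> nat \<Rightarrow> nat \<Rightarrow> real" where
  "decomposition_const T CL ch \<sigma> j k =
     max (max (iterate_norm_const T CL ch \<sigma> j k) (error_norm_const T CL ch \<sigma> j k))
       (max (iterate_norm_const T CL ch \<sigma> 0 k)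
         (error_norm_const T CL ch \<sigma> 0 k / smallness_threshold (real CARD('n)) CL ch \<sigma> j ^ j))"

lemma metric_size_const_nonneg: "0 \<le> N \<Longrightarrow> 0 \<le> CL \<Longrightarrow> 0 \<le> ch \<Longrightarrow> 0 \<le> metric_size_const N CL ch \<sigma> i"
  unfolding metric_size_const_def
  by (intro mult_nonneg_nonneg zero_le_power2 mono_nonneg_nonneg[OF mono_nonneg_grad_metric_consts]
      mono_nonneg_iterate_consts)

lemma metric_size_const_0: "metric_size_const N CL ch \<sigma> 0 = 0"
  by (simp add: metric_size_const_def grad_metric_consts_def)

lemma smallness_threshold_pos:
  "0 < \<sigma> \<Longrightarrow> 0 \<le> N \<Longrightarrow> 0 \<le> CL \<Longrightarrow> 0 \<le> ch \<Longrightarrow> 0 < smallness_threshold N CL ch \<sigma> j"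
  unfolding smallness_threshold_def using metric_size_const_nonneg
  by (simp add: sum_nonneg add_pos_nonneg)

lemma small_of_le_smallness_threshold:
  assumes "\<epsilon>\<^sup>2 \<le> smallness_threshold N CL ch \<sigma> j" "0 < \<sigma>" "0 \<le> N" "0 \<le> CL" "0 \<le> ch"
  shows "\<forall>i\<le>j. \<epsilon>\<^sup>2 * metric_size_const N CL ch \<sigma> i \<le> \<sigma>"
proof (intro allI impI)
  fix i assume "i \<le> j"
  have M: "0 \<le> metric_size_const N CL ch \<sigma> i'" for i' using assms(3-5) by (rule metric_size_const_nonneg)
  then have "metric_size_const N CL ch \<sigma> i \<le> 1 + (\<Sum>i\<le>j. metric_size_const N CL ch \<sigma> i)"
    using member_le_sum[of i "{..j}"] \<open>i \<le> j\<close> by (smt (verit) atMost_iff finite_atMost)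
  moreover have pos: "0 < 1 + (\<Sum>i\<le>j. metric_size_const N CL ch \<sigma> i)" using M by (simp add: sum_nonneg add_pos_nonneg)
  ultimately have "\<epsilon>\<^sup>2 * metric_size_const N CL ch \<sigma> i
      \<le> smallness_threshold N CL ch \<sigma> j * (1 + (\<Sum>i\<le>j. metric_size_const N CL ch \<sigma> i))"
    using assms(1) M less_imp_le[OF smallness_threshold_pos[OF assms(2-5)]] by (intro mult_mono) auto
  then show "\<epsilon>\<^sup>2 * metric_size_const N CL ch \<sigma> i \<le> \<sigma>"
    unfolding smallness_threshold_def using pos by simp
qed

lemma error_norm_const_nonneg: "0 \<le> CL \<Longrightarrow> 0 \<le> ch \<Longrightarrow> 0 < \<sigma> \<Longrightarrow> 0 \<le> error_norm_const T CL ch \<sigma> j k"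
  unfolding error_norm_const_def
  by (intro sum_nonneg mult_nonneg_nonneg mono_nonneg_nonneg[OF mono_nonneg_grad_metric_diff_consts]
      mono_nonneg_increment_consts mono_nonneg_iterate_consts) auto

lemma mult_le_div_power_mult:
  fixes c d e :: real
  assumes "0 \<le> c" "0 < d" "d \<le> e"
  shows "c * e \<le> c / d ^ j * e ^ Suc j"
proof -
  have "d ^ j \<le> e ^ j" using assms by (intro power_mono) auto
  then have "c \<le> c / d ^ j * e ^ j" using assms by (simp add: field_simps mult_left_mono)
  then have "c * e \<le> c / d ^ j * e ^ j * e" using assms by (intro mult_right_mono) auto
  then show ?thesis by (simp add: ac_simps)
qed

context decomposition_setting
begin

lemma iterate_decomposition:
  assumes small: "\<forall>i\<le>j. \<epsilon>\<^sup>2 * metric_size_const (real CARD('n)) CL ch \<sigma> i \<le> \<sigma>" and x: "x \<in> S"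
  shows "h x = (\<Sum>P\<in>Pairs CARD('n). (A (Suc j) P x)\<^sup>2 *\<^sub>R outer (xi P) (xi P))
    + grad_metric \<mu> (A (Suc j)) x + (grad_metric \<mu> (A j) x - grad_metric \<mu> (A (Suc j)) x)"
proof -
  have "(A (Suc j) P x)\<^sup>2 = L P (h x - grad_metric \<mu> (A j) x)" if "P \<in> Pairs CARD('n)" for P
    using iterate_ge(1)[OF small order_refl that x] sig by simp
  then have "(\<Sum>P\<in>Pairs CARD('n). (A (Suc j) P x)\<^sup>2 *\<^sub>R outer (xi P) (xi P)) = h x - grad_metric \<mu> (A j) x"
    using coefficient_decomposition[OF x, of "A j"] by (simp cong: sum.cong)
  then show ?thesis by simp
qed

lemma decomposition_small:
  assumes small: "\<forall>i\<le>j. \<epsilon>\<^sup>2 * metric_size_const (real CARD('n)) CL ch \<sigma> i \<le> \<sigma>" and ne: "S \<noteq> {}"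
  defines "E \<equiv> \<lambda>x. grad_metric \<mu> (A j) x - grad_metric \<mu> (A (Suc j)) x"
  shows "is_decomposition S \<mu> h \<sigma> (A (Suc j)) E \<and>
    (\<forall>k. cnorm S (Pairs CARD('n)) (A (Suc j)) k \<le> iterate_norm_const TYPE('n) CL ch \<sigma> j k * W ^ k \<and>
      cnorm S UNIV (ents E) k \<le> error_norm_const TYPE('n) CL ch \<sigma> j k * \<epsilon> ^ (2 * (j + 1)) * W ^ k)"
proof -
  have a: "deriv_bounds S W 1 (iterate_consts (real CARD('n)) CL ch \<sigma> (Suc j)) (A (Suc j) P)"
    if "P \<in> Pairs CARD('n)" for P
    using deriv_bounds_iterate[OF small _ that, of "Suc j"] by (simp del: iterate.simps iterate_consts.simps)
  have e: "deriv_bounds S W (\<epsilon> ^ (2 * (j + 1)))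
      (grad_metric_diff_consts (real CARD('n)) (increment_consts (real CARD('n)) CL ch \<sigma> j)
        (iterate_consts (real CARD('n)) CL ch \<sigma> j) (iterate_consts (real CARD('n)) CL ch \<sigma> (Suc j)))
      (ents E PQ)" for PQ
    using deriv_bounds_grad_metric_step[OF small order_refl, of "fst PQ" "snd PQ"]
      deriv_bounds_increment[OF small order_refl] diag_in_Pairs
    unfolding E_def by (simp add: ents_apply[abs_def])
  have "is_decomposition S \<mu> h \<sigma> (A (Suc j)) E"
    unfolding is_decomposition_def grad_metric_def[symmetric]
    using smooth_cl_deriv_bounds[OF a] smooth_cl_deriv_bounds[OF e] iterate_decomposition[OF small]
      iterate_ge(2)[OF small order_refl]
    by (auto simp: E_def transpose_diff transpose_grad_metric)
  moreover have "cnorm S (Pairs CARD('n)) (A (Suc j)) k \<le> iterate_norm_const TYPE('n) CL ch \<sigma> j k * W ^ k" for k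
    using cnorm_le_deriv_bounds[OF ne _ W iterate_consts_mono_nonneg a, where k=k]
    by (simp add: iterate_norm_const_def mult.commute)
  moreover have "cnorm S UNIV (ents E) k \<le> error_norm_const TYPE('n) CL ch \<sigma> j k * \<epsilon> ^ (2 * (j + 1)) * W ^ k" for k
    using cnorm_le_deriv_bounds[where F="ents E" and J=UNIV and k=k, OF ne _ W
        mono_nonneg_grad_metric_diff_consts[OF increment_consts_mono_nonneg iterate_consts_mono_nonneg
          iterate_consts_mono_nonneg] e] eps(1)
    by (simp add: error_norm_const_def ac_simps)
  ultimately show ?thesis by blast
qed

lemma decomposition:
  assumes ne: "S \<noteq> {}"
  shows "\<exists>a E. is_decomposition S \<mu> h \<sigma> a E \<and>
    (\<forall>k. cnorm S (Pairs CARD('n)) a k \<le> decomposition_const TYPE('n) CL ch \<sigma> j k * W ^ k \<and>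
      cnorm S UNIV (ents E) k \<le> decomposition_const TYPE('n) CL ch \<sigma> j k * \<epsilon> ^ (2 * (j + 1)) * W ^ k)"
proof (cases "\<epsilon>\<^sup>2 \<le> smallness_threshold (real CARD('n)) CL ch \<sigma> j")
  case True
  then have "\<forall>i\<le>j. \<epsilon>\<^sup>2 * metric_size_const (real CARD('n)) CL ch \<sigma> i \<le> \<sigma>"
    using sig CL_nonneg ch by (intro small_of_le_smallness_threshold) auto
  from decomposition_small[OF this ne] show ?thesis
    using W eps(1) unfolding decomposition_const_def
    by (intro exI conjI allI) (auto intro: order_trans mult_right_mono)
next
  case False
  have "\<forall>i\<le>0. \<epsilon>\<^sup>2 * metric_size_const (real CARD('n)) CL ch \<sigma> i \<le> \<sigma>"
    using sig by (simp add: metric_size_const_0)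
  from decomposition_small[OF this ne] obtain a E where D: "is_decomposition S \<mu> h \<sigma> a E"
    and a: "\<And>k. cnorm S (Pairs CARD('n)) a k \<le> iterate_norm_const TYPE('n) CL ch \<sigma> 0 k * W ^ k"
    and E: "\<And>k. cnorm S UNIV (ents E) k \<le> error_norm_const TYPE('n) CL ch \<sigma> 0 k * \<epsilon>\<^sup>2 * W ^ k"
    by auto
  have "error_norm_const TYPE('n) CL ch \<sigma> 0 k * \<epsilon>\<^sup>2 \<le>
      error_norm_const TYPE('n) CL ch \<sigma> 0 k / smallness_threshold (real CARD('n)) CL ch \<sigma> j ^ j * \<epsilon> ^ (2 * (j + 1))" for k
  proof -
    have "0 \<le> error_norm_const TYPE('n) CL ch \<sigma> 0 k" "0 < smallness_threshold (real CARD('n)) CL ch \<sigma> j"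
      using CL_nonneg ch sig by (auto intro: error_norm_const_nonneg smallness_threshold_pos)
    moreover have "\<epsilon> ^ (2 * (j + 1)) = (\<epsilon>\<^sup>2) ^ Suc j" by (metis Suc_eq_plus1 power_mult)
    ultimately show ?thesis using mult_le_div_power_mult[of _ _ "\<epsilon>\<^sup>2" j] False by simp
  qed
  then have "cnorm S UNIV (ents E) k \<le> decomposition_const TYPE('n) CL ch \<sigma> j k * \<epsilon> ^ (2 * (j + 1)) * W ^ k" for k
    using E[of k] W eps(1) unfolding decomposition_const_def
    by (smt (verit, best) max.cobounded2 mult_right_mono zero_le_power)
  moreover have "cnorm S (Pairs CARD('n)) a k \<le> decomposition_const TYPE('n) CL ch \<sigma> j k * W ^ k" for k
    using a[of k] W unfolding decomposition_const_def by (smt (verit) max.cobounded2 max.cobounded1 mult_right_mono zero_le_power)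
  ultimately show ?thesis using D by blast
qed

end
section \<open>From the hypotheses of the theorem to the setting\<close>

lemma abs_le_sqrt_sum_sq:
  fixes a :: "'j \<Rightarrow> real"
  assumes "finite J" "j \<in> J"
  shows "\<bar>a j\<bar> \<le> sqrt (\<Sum>i\<in>J. (a i)\<^sup>2)"
proof -
  have "(a j)\<^sup>2 \<le> (\<Sum>i\<in>J. (a i)\<^sup>2)" by (rule member_le_sum[OF assms(2)]) (use assms in auto)
  then have "sqrt ((a j)\<^sup>2) \<le> sqrt (\<Sum>i\<in>J. (a i)\<^sup>2)" by (rule real_sqrt_le_mono)
  then show ?thesis by simp
qed

lemma norm_le_cnorm_0:
  fixes h :: "real^'n::finite \<Rightarrow> real^'n^'n"
  assumes bd: "bounded \<Omega>" and h: "\<And>PQ. smooth_cl \<Omega> (ents h PQ)" and x: "x \<in> \<Omega>"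
  shows "norm (h x - H) \<le> cnorm \<Omega> UNIV (ents (\<lambda>x. h x - H)) 0"
proof -
  have uc: "uniformly_continuous_on \<Omega> (Dm \<beta> (ents (\<lambda>x. h x - H) PQ))" if "\<beta> \<in> MI 0" for \<beta> PQ
  proof -
    have "uniformly_continuous_on \<Omega> (\<lambda>x. ents h PQ x - H $ fst PQ $ snd PQ)"
      using h[of PQ] unfolding smooth_cl_def
      by (intro uniformly_continuous_on_diff uniformly_continuous_on_const) (metis Dl.simps(1))
    then show ?thesis using that by (simp add: MI_0 Dm_0 ents_apply[abs_def])
  qed
  have "sqrt (\<Sum>PQ\<in>UNIV. (Dm (\<lambda>_. 0) (ents (\<lambda>x. h x - H) PQ) x)\<^sup>2) \<le> cnorm \<Omega> UNIV (ents (\<lambda>x. h x - H)) 0"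
    by (rule sqrt_sum_sq_le_cnorm[OF bd _ _ order_refl _ x]) (use uc in \<open>auto simp: MI_0\<close>)
  then show ?thesis by (simp add: Dm_0 ents_apply norm_matrix_eq[of "h x - H"])
qed

lemma deriv_bounds_of_cnorm:
  fixes h :: "real^'n::finite \<Rightarrow> real^'n^'n"
  assumes S: "open \<Omega>" and bd: "bounded \<Omega>" and h: "\<And>PQ. smooth_cl \<Omega> (ents h PQ)"
    and hb: "\<And>i. 1 \<le> i \<Longrightarrow> cnorm \<Omega> UNIV (ents h) i \<le> W ^ i" and W: "1 \<le> W" and ch: "1 \<le> ch"
    and h0: "\<And>x PQ. x \<in> \<Omega> \<Longrightarrow> \<bar>ents h PQ x\<bar> \<le> ch"
  shows "deriv_bounds \<Omega> W 1 (\<lambda>_. ch) (ents h PQ)"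
proof (rule deriv_boundsI, rule deriv_bounds_uptoI)
  fix ds :: "'n list"
  show "Dl ds (ents h PQ) differentiable_on \<Omega>" "uniformly_continuous_on \<Omega> (Dl ds (ents h PQ))"
    using h[of PQ] unfolding smooth_cl_def by auto
  fix x assume x: "x \<in> \<Omega>"
  show "\<bar>Dl ds (ents h PQ) x\<bar> \<le> 1 * ch * W ^ length ds"
  proof (cases "ds = []")
    case True
    then show ?thesis using h0[OF x] by simp
  next
    case False
    let ?\<beta> = "\<lambda>p. count (mset ds) p"
    have "Dl ds (ents h PQ) x = Dm ?\<beta> (ents h PQ) x"
      by (rule Dl_eq_Dm[OF S _ x]) (use h in \<open>simp add: smooth_cl_def\<close>)
    also have "\<bar>\<dots>\<bar> \<le> sqrt (\<Sum>PQ'\<in>UNIV. (Dm ?\<beta> (ents h PQ') x)\<^sup>2)" by (rule abs_le_sqrt_sum_sq) auto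
    also have "\<dots> \<le> cnorm \<Omega> UNIV (ents h) (length ds)"
      by (rule sqrt_sum_sq_le_cnorm[OF bd _ _ order_refl count_mset_in_MI x])
         (use h in \<open>auto simp: smooth_cl_def Dm_eq_Dl\<close>)
    also have "\<dots> \<le> W ^ length ds" using False by (intro hb) (simp add: Suc_leI)
    finally show ?thesis using ch W by (simp add: order_trans)
  qed
qed

lemma inverse_sq_le_ratio_sq:
  fixes \<mu> :: "nat \<Rightarrow> real"
  assumes \<mu>0: "1 \<le> \<mu> 0" and mono: "\<forall>i<n. \<mu> i \<le> \<mu> (Suc i)" and i: "i < n"
  shows "inverse ((\<mu> (Suc i))\<^sup>2) * (\<mu> 0)\<^sup>2 \<le> (\<mu> 0 / \<mu> 1)\<^sup>2"
proof -
  have mono1: "\<mu> 1 \<le> \<mu> (Suc k)" if "k < n" for k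
    using that
  proof (induction k)
    case (Suc k)
    then show ?case using mono[rule_format, of "Suc k"] by (simp add: order_trans)
  qed simp
  have p1: "0 < \<mu> 1" using mono[rule_format, of 0] i \<mu>0 by simp
  have "\<mu> 0 / \<mu> (Suc i) \<le> \<mu> 0 / \<mu> 1" using mono1[OF i] p1 \<mu>0 by (intro divide_left_mono) auto
  moreover have "0 \<le> \<mu> 0 / \<mu> (Suc i)" using mono1[OF i] p1 \<mu>0 by simp
  ultimately have "(\<mu> 0 / \<mu> (Suc i))\<^sup>2 \<le> (\<mu> 0 / \<mu> 1)\<^sup>2" by (rule power_mono)
  then show ?thesis by (simp add: power_divide field_simps)
qed

lemma abs_entry_le:
  fixes M H :: "real^'n::finite^'n"
  assumes "norm (M - H) \<le> 1"
  shows "\<bar>M $ fst PQ $ snd PQ\<bar> \<le> 1 + (\<Sum>PQ\<in>UNIV. \<bar>H $ fst PQ $ snd PQ\<bar>)"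
proof -
  have "\<bar>M $ fst PQ $ snd PQ\<bar> \<le> \<bar>H $ fst PQ $ snd PQ\<bar> + \<bar>(M - H) $ fst PQ $ snd PQ\<bar>"
    by simp
  moreover have "\<bar>H $ fst PQ $ snd PQ\<bar> \<le> (\<Sum>PQ\<in>UNIV. \<bar>H $ fst PQ $ snd PQ\<bar>)"
    by (rule member_le_sum) auto
  moreover have "\<bar>(M - H) $ fst PQ $ snd PQ\<bar> \<le> 1" using abs_entry_le_norm assms by (rule order_trans)
  ultimately show ?thesis by linarith
qed

lemma decomposition_setting_of_hypotheses:
  fixes L :: "nat \<times> nat \<Rightarrow> real^'n::finite^'n \<Rightarrow> real"
  assumes sig: "0 < \<sigma>"
    and L: "\<forall>P\<in>Pairs CARD('n). linear (L P)"
      "\<forall>H. transpose H = H \<longrightarrow> H = (\<Sum>P\<in>Pairs CARD('n). L P H *\<^sub>R outer (xi P) (xi P))"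
      "\<forall>H. transpose H = H \<and> norm (H - (hstar :: real^'n^'n)) \<le> 2 * \<sigma> \<longrightarrow> (\<forall>P\<in>Pairs CARD('n). L P H \<ge> \<sigma>)"
    and CL: "CL = (\<Sum>P\<in>Pairs CARD('n). \<Sum>PQ\<in>UNIV. \<bar>L P (matrix_unit PQ)\<bar>)"
    and ch: "ch = 1 + (\<Sum>PQ\<in>UNIV. \<bar>(hstar :: real^'n^'n) $ fst PQ $ snd PQ\<bar>)"
    and \<Omega>: "open \<Omega>" "bounded \<Omega>" "\<Omega> \<noteq> {}" and \<mu>: "1 \<le> \<mu> 0" "\<forall>i<CARD('n). \<mu> i \<le> \<mu> (Suc i)"
    and h: "\<forall>PQ. smooth_cl \<Omega> (ents h PQ)" "\<forall>x\<in>\<Omega>. transpose (h x) = h x"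
      "cnorm \<Omega> UNIV (ents (\<lambda>x. h x - hstar)) 0 + \<mu> 0 / \<mu> 1 \<le> 2 * (min \<sigma> 1 / 4)"
      "\<forall>i\<ge>1. cnorm \<Omega> UNIV (ents h) i \<le> \<mu> 0 ^ i"
  shows "decomposition_setting \<Omega> (\<mu> 0) (\<mu> 0 / \<mu> 1) \<sigma> CL ch \<mu> h L"
proof -
  have near: "norm (h x - hstar) \<le> cnorm \<Omega> UNIV (ents (\<lambda>x. h x - hstar)) 0" if "x \<in> \<Omega>" for x
    using norm_le_cnorm_0[OF \<Omega>(2)] h(1) that by blast
  obtain x0 where "x0 \<in> \<Omega>" using \<Omega>(3) by blast
  then have cn0: "0 \<le> cnorm \<Omega> UNIV (ents (\<lambda>x. h x - hstar)) 0" using near norm_ge_zero order_trans by blast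
  have "\<mu> 0 \<le> \<mu> 1" using \<mu>(2) zero_less_card_finite by auto
  then have eps0: "0 < \<mu> 0 / \<mu> 1" using \<mu>(1) by simp
  have small: "cnorm \<Omega> UNIV (ents (\<lambda>x. h x - hstar)) 0 \<le> min \<sigma> 1" "\<mu> 0 / \<mu> 1 \<le> min \<sigma> 1"
    using h(3) eps0 cn0 by linarith+
  then have eps: "0 < \<mu> 0 / \<mu> 1" "\<mu> 0 / \<mu> 1 \<le> 1" using eps0 by auto
  have h_near: "norm (h x - hstar) \<le> \<sigma>" "norm (h x - hstar) \<le> 1" if "x \<in> \<Omega>" for x
    using near[OF that] small(1) by auto
  have hb: "deriv_bounds \<Omega> (\<mu> 0) 1 (\<lambda>_. ch) (ents h PQ)" for PQ
  proof (rule deriv_bounds_of_cnorm[OF \<Omega>(1,2)])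
    show "\<bar>ents h PQ x\<bar> \<le> ch" if "x \<in> \<Omega>" for x PQ
      unfolding ch ents_apply by (rule abs_entry_le[OF h_near(2)[OF that]])
  qed (use h(1,4) \<mu>(1) in \<open>auto simp: ch sum_nonneg\<close>)
  have "1 \<le> ch" unfolding ch by (simp add: sum_nonneg)
  then show ?thesis
    using \<Omega>(1) \<mu>(1) eps sig L CL hb h(2) h_near(1) inverse_sq_le_ratio_sq[OF \<mu>]
    by (intro decomposition_setting.intro) auto
qed

lemma decomposition_of_hypotheses:
  fixes L :: "nat \<times> nat \<Rightarrow> real^'n::finite^'n \<Rightarrow> real" and \<Omega> :: "(real^'n) set"
  assumes sig: "0 < \<sigma>"
    and L: "\<forall>P\<in>Pairs CARD('n). linear (L P)"
      "\<forall>H. transpose H = H \<longrightarrow> H = (\<Sum>P\<in>Pairs CARD('n). L P H *\<^sub>R outer (xi P) (xi P))"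
      "\<forall>H. transpose H = H \<and> norm (H - (hstar :: real^'n^'n)) \<le> 2 * \<sigma> \<longrightarrow> (\<forall>P\<in>Pairs CARD('n). L P H \<ge> \<sigma>)"
    and CL: "CL = (\<Sum>P\<in>Pairs CARD('n). \<Sum>PQ\<in>UNIV. \<bar>L P (matrix_unit PQ)\<bar>)"
    and ch: "ch = 1 + (\<Sum>PQ\<in>UNIV. \<bar>(hstar :: real^'n^'n) $ fst PQ $ snd PQ\<bar>)"
    and \<Omega>: "open \<Omega>" "bounded \<Omega>" "\<Omega> \<noteq> {}" and \<mu>: "1 \<le> \<mu> 0" "\<forall>i<CARD('n). \<mu> i \<le> \<mu> (Suc i)"
    and h: "\<forall>PQ. smooth_cl \<Omega> (ents h PQ)" "\<forall>x\<in>\<Omega>. transpose (h x) = h x"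
      "cnorm \<Omega> UNIV (ents (\<lambda>x. h x - hstar)) 0 + \<mu> 0 / \<mu> 1 \<le> 2 * (min \<sigma> 1 / 4)"
      "\<forall>i\<ge>1. cnorm \<Omega> UNIV (ents h) i \<le> \<mu> 0 ^ i"
  shows "\<forall>j. \<exists>a E. (\<forall>P\<in>Pairs CARD('n). smooth_cl \<Omega> (a P)) \<and>
    (\<forall>P. smooth_cl \<Omega> (ents E P)) \<and> (\<forall>x\<in>\<Omega>. transpose (E x) = E x) \<and>
    (\<forall>x\<in>\<Omega>. h x = (\<Sum>P\<in>Pairs CARD('n). (a P x)\<^sup>2 *\<^sub>R outer (xi P) (xi P))
                  + (\<Sum>i<CARD('n). inverse ((\<mu> (Suc i))\<^sup>2) *\<^sub>R outer (grad (a (i,i)) x) (grad (a (i,i)) x))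
                  + E x) \<and>
    (\<forall>P\<in>Pairs CARD('n). \<forall>x\<in>\<Omega>. a P x \<ge> sqrt \<sigma>) \<and>
    (\<forall>k. cnorm \<Omega> (Pairs CARD('n)) a k \<le> decomposition_const TYPE('n) CL ch \<sigma> j k * \<mu> 0 ^ k \<and>
      cnorm \<Omega> UNIV (ents E) k \<le> decomposition_const TYPE('n) CL ch \<sigma> j k * (\<mu> 0 / \<mu> 1) ^ (2 * (j + 1)) * \<mu> 0 ^ k)"
proof -
  have "decomposition_setting \<Omega> (\<mu> 0) (\<mu> 0 / \<mu> 1) \<sigma> CL ch \<mu> h L"
    by (rule decomposition_setting_of_hypotheses; rule assms)
  from decomposition_setting.decomposition[OF this \<Omega>(3)] show ?thesis
    unfolding is_decomposition_def conj_assoc by blast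
qed

lemma min_quarter_less_sqrt: "0 < \<sigma> \<Longrightarrow> min \<sigma> 1 / 4 < sqrt (\<sigma> :: real)"
proof (cases "\<sigma> \<le> 1")
  case True
  assume "0 < \<sigma>"
  then have "\<sigma> \<le> sqrt \<sigma>" using True by (simp add: real_le_rsqrt power2_eq_square mult_le_cancel_left1)
  then show ?thesis using \<open>0 < \<sigma>\<close> True by simp
next
  case False
  then have "1 < sqrt \<sigma>" by simp
  then show ?thesis using False by linarith
qed

theorem lemma2p3:
  fixes \<sigma>s :: real
  assumes n2: "CARD('n::finite) \<ge> 2"
    and sig: "sigma_star_prop TYPE('n) \<sigma>s"
  shows "\<exists>\<sigma>0 (C :: nat \<Rightarrow> nat \<Rightarrow> real). 0 < \<sigma>0 \<and> \<sigma>0 < sqrt \<sigma>s \<and>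
    (\<forall>(\<Omega> :: (real^'n) set) (\<mu> :: nat \<Rightarrow> real) (h :: real^'n \<Rightarrow> real^'n^'n).
       open \<Omega> \<and> connected \<Omega> \<and> bounded \<Omega> \<and> \<Omega> \<noteq> {} \<and>
       1 \<le> \<mu> 0 \<and> (\<forall>i<CARD('n). \<mu> i \<le> \<mu> (Suc i)) \<and>
       (\<forall>P. smooth_cl \<Omega> (ents h P)) \<and> (\<forall>x\<in>\<Omega>. transpose (h x) = h x) \<and>
       cnorm \<Omega> UNIV (ents (\<lambda>x. h x - hstar)) 0 + \<mu> 0 / \<mu> 1 \<le> 2 * \<sigma>0 \<and>
       (\<forall>i\<ge>1. cnorm \<Omega> UNIV (ents h) i \<le> \<mu> 0 ^ i)
     \<longrightarrow>
       (\<forall>j::nat. \<exists>(a :: nat \<times> nat \<Rightarrow> real^'n \<Rightarrow> real) (E :: real^'n \<Rightarrow> real^'n^'n).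
          (\<forall>P\<in>Pairs CARD('n). smooth_cl \<Omega> (a P)) \<and>
          (\<forall>P. smooth_cl \<Omega> (ents E P)) \<and> (\<forall>x\<in>\<Omega>. transpose (E x) = E x) \<and>
          (\<forall>x\<in>\<Omega>. h x = (\<Sum>P\<in>Pairs CARD('n). (a P x)\<^sup>2 *\<^sub>R outer (xi P) (xi P))
                        + (\<Sum>i<CARD('n). inverse ((\<mu> (Suc i))\<^sup>2) *\<^sub>R outer (grad (a (i,i)) x) (grad (a (i,i)) x))
                        + E x) \<and>
          (\<forall>P\<in>Pairs CARD('n). \<forall>x\<in>\<Omega>. a P x \<ge> sqrt \<sigma>s) \<and>
          (\<forall>k. cnorm \<Omega> (Pairs CARD('n)) a k \<le> C j k * \<mu> 0 ^ k \<and>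
               cnorm \<Omega> UNIV (ents E) k \<le> C j k * (\<mu> 0 / \<mu> 1) ^ (2 * (j + 1)) * \<mu> 0 ^ k)))"
proof -
  obtain L :: "nat \<times> nat \<Rightarrow> real^'n^'n \<Rightarrow> real" where sig_pos: "0 < \<sigma>s"
    and L: "\<forall>P\<in>Pairs CARD('n). linear (L P)"
      "\<forall>H. transpose H = H \<longrightarrow> H = (\<Sum>P\<in>Pairs CARD('n). L P H *\<^sub>R outer (xi P) (xi P))"
      "\<forall>H. transpose H = H \<and> norm (H - (hstar :: real^'n^'n)) \<le> 2 * \<sigma>s \<longrightarrow> (\<forall>P\<in>Pairs CARD('n). L P H \<ge> \<sigma>s)"
    using sig unfolding sigma_star_prop_def by blast
  define CL where "CL = (\<Sum>P\<in>Pairs CARD('n). \<Sum>PQ\<in>UNIV. \<bar>L P (matrix_unit PQ)\<bar>)"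
  define ch where "ch = 1 + (\<Sum>PQ\<in>UNIV. \<bar>(hstar :: real^'n^'n) $ fst PQ $ snd PQ\<bar>)"
  note decomposition = decomposition_of_hypotheses[OF sig_pos L CL_def ch_def]
  show ?thesis
  proof (intro exI[of _ "min \<sigma>s 1 / 4"] exI[of _ "decomposition_const TYPE('n) CL ch \<sigma>s"] conjI allI impI)
    show "0 < min \<sigma>s 1 / 4" using sig_pos by simp
    show "min \<sigma>s 1 / 4 < sqrt \<sigma>s" by (rule min_quarter_less_sqrt[OF sig_pos])
  qed (elim conjE, rule decomposition[THEN spec]; assumption)
qed

end
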